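(* Let $f$ be any morphism in $\mathbf{Gpd}^{\mathbf{G}}$. Then $f$ is a pullback of $p_\Delta:\widetilde{U}_\Delta\to U_\Delta$ if and only if the underlying functor of groupoids of $f$ is a discrete fibration in $\mathbf{Gpd}$ whose (discrete) fibers have $\kappa$-small sets of objects.
   Context: $\mathbf{Gpd}^{\mathbf{G}}$ is the category of groupoids equipped with an involution and functors commuting with the involutions. $\kappa$ is an inaccessible cardinal. A discrete fibration in $\mathbf{Gpd}$ is a functor $f$ such that for every isomorphism $h:f(x)\to y$ there is a unique morphism $\tilde h$ with domain $x$ and $f(\tilde h)=h$. The groupoid $U_\Delta$ has objects $(A_0,A_1,\varphi)$ with $A_0,A_1$ sets of cardinality $<\kappa$ (viewed as discrete groupoids) and $\varphi:A_0\to A_1$ a bijection; a morphism $(A_0,A_1,\varphi)\to(B_0,B_1,\psi)$ is a pair of bijections $(\rho_0:A_0\to B_0,\rho_1:A_1\to B_1)$ with $\psi\rho_0=\rho_1\varphi$; the involution is $(A_0,A_1,\varphi)\mapsto(A_1,A_0,\varphi^{-1})$, $(\rho_0,\rho_1)\mapsto(\rho_1,\rho_0)$. The groupoid $\widetilde{U}_\Delta$ has objects $(A_0,A_1,a,\varphi)$ with $(A_0,A_1,\varphi)$ as before and $a\in A_0$; morphisms $(A_0,A_1,a,\varphi)\to(B_0,B_1,b,\psi)$ are morphisms $(\rho_0,\rho_1)$ of $U_\Delta$ with $\rho_0(a)=b$; the involution is $(A_0,A_1,a,\varphi)\mapsto(A_1,A_0,\varphi(a),\varphi^{-1})$, $(\rho_0,\rho_1)\mapsto(\rho_1,\rho_0)$.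 The morphism $p_\Delta$ forgets the point $a$. *)

theory Defs
  imports Main "HOL-Library.FuncSet"
begin

unbundle cardinal_syntax

definition inaccessible :: "'k rel \<Rightarrow> bool" where
  "inaccessible \<kappa> \<longleftrightarrow> Card_order \<kappa> \<and> natLeq <o \<kappa> \<and> regularCard \<kappa> \<and>
     (\<forall>X. X \<subseteq> Field \<kappa> \<longrightarrow> |X| <o \<kappa> \<longrightarrow> |Pow X| <o \<kappa>)"

record ('o, 'a) gpd =
  Ob   :: "'o set"
  Ar   :: "'a set"
  Dom  :: "'a \<Rightarrow> 'o"
  Cod  :: "'a \<Rightarrow> 'o"
  Idt  :: "'o \<Rightarrow> 'a"
  Comp :: "'a \<Rightarrow> 'a \<Rightarrow> 'a"   \<comment> \<open>Comp g f = g after f\<close>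

definition is_gpd :: "('o, 'a, 'x) gpd_scheme \<Rightarrow> bool" where
  "is_gpd C \<longleftrightarrow>
     (\<forall>f\<in>Ar C. Dom C f \<in> Ob C \<and> Cod C f \<in> Ob C) \<and>
     (\<forall>x\<in>Ob C. Idt C x \<in> Ar C \<and> Dom C (Idt C x) = x \<and> Cod C (Idt C x) = x) \<and>
     (\<forall>f\<in>Ar C. \<forall>g\<in>Ar C. Cod C f = Dom C g \<longrightarrow>
        Comp C g f \<in> Ar C \<and> Dom C (Comp C g f) = Dom C f \<and> Cod C (Comp C g f) = Cod C g) \<and>
     (\<forall>f\<in>Ar C. \<forall>g\<in>Ar C. \<forall>h\<in>Ar C. Cod C f = Dom C g \<longrightarrow> Cod C g = Dom C h \<longrightarrow>
        Comp C h (Comp C g f) = Comp C (Comp C h g) f) \<and>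
     (\<forall>f\<in>Ar C. Comp C f (Idt C (Dom C f)) = f \<and> Comp C (Idt C (Cod C f)) f = f) \<and>
     (\<forall>f\<in>Ar C. \<exists>g\<in>Ar C. Dom C g = Cod C f \<and> Cod C g = Dom C f \<and>
        Comp C g f = Idt C (Dom C f) \<and> Comp C f g = Idt C (Cod C f))"

record ('o1, 'a1, 'o2, 'a2) fnctr =
  fo :: "'o1 \<Rightarrow> 'o2"
  fa :: "'a1 \<Rightarrow> 'a2"

definition is_functor ::
  "('o1, 'a1, 'x) gpd_scheme \<Rightarrow> ('o2, 'a2, 'y) gpd_scheme \<Rightarrow> ('o1, 'a1, 'o2, 'a2) fnctr \<Rightarrow> bool" where
  "is_functor C D F \<longleftrightarrow>
     (\<forall>x\<in>Ob C. fo F x \<in> Ob D) \<and>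
     (\<forall>f\<in>Ar C. fa F f \<in> Ar D \<and> Dom D (fa F f) = fo F (Dom C f) \<and> Cod D (fa F f) = fo F (Cod C f)) \<and>
     (\<forall>x\<in>Ob C. fa F (Idt C x) = Idt D (fo F x)) \<and>
     (\<forall>f\<in>Ar C. \<forall>g\<in>Ar C. Cod C f = Dom C g \<longrightarrow> fa F (Comp C g f) = Comp D (fa F g) (fa F f))"

text \<open>Groupoid equipped with a (strict) involution, i.e. an action of the group with two elements.\<close>
record ('o, 'a) gpdG = "('o, 'a) gpd" +
  invo :: "'o \<Rightarrow> 'o"
  inva :: "'a \<Rightarrow> 'a"

definition inv_fnctr :: "('o, 'a, 'x) gpdG_scheme \<Rightarrow> ('o, 'a, 'o, 'a) fnctr" where
  "inv_fnctr C = \<lparr>fo = invo C, fa = inva C\<rparr>"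

definition is_gpdG :: "('o, 'a, 'x) gpdG_scheme \<Rightarrow> bool" where
  "is_gpdG C \<longleftrightarrow> is_gpd C \<and> is_functor C C (inv_fnctr C) \<and>
     (\<forall>x\<in>Ob C. invo C (invo C x) = x) \<and> (\<forall>f\<in>Ar C. inva C (inva C f) = f)"

definition is_morG ::
  "('o1, 'a1, 'x) gpdG_scheme \<Rightarrow> ('o2, 'a2, 'y) gpdG_scheme \<Rightarrow> ('o1, 'a1, 'o2, 'a2) fnctr \<Rightarrow> bool" where
  "is_morG C D F \<longleftrightarrow> is_gpdG C \<and> is_gpdG D \<and> is_functor C D F \<and>
     (\<forall>x\<in>Ob C. fo F (invo C x) = invo D (fo F x)) \<and>
     (\<forall>f\<in>Ar C. fa F (inva C f) = inva D (fa F f))"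

definition comp_fnctr ::
  "('o2, 'a2, 'o3, 'a3) fnctr \<Rightarrow> ('o1, 'a1, 'o2, 'a2) fnctr \<Rightarrow> ('o1, 'a1, 'o3, 'a3) fnctr" where
  "comp_fnctr G F = \<lparr>fo = fo G \<circ> fo F, fa = fa G \<circ> fa F\<rparr>"

definition is_isoG ::
  "('o1, 'a1, 'x) gpdG_scheme \<Rightarrow> ('o2, 'a2, 'y) gpdG_scheme \<Rightarrow> ('o1, 'a1, 'o2, 'a2) fnctr \<Rightarrow> bool" where
  "is_isoG C D F \<longleftrightarrow> is_morG C D F \<and>
     (\<exists>K. is_morG D C K \<and>
        (\<forall>x\<in>Ob C. fo K (fo F x) = x) \<and> (\<forall>f\<in>Ar C. fa K (fa F f) = f) \<and>
        (\<forall>y\<in>Ob D. fo F (fo K y) = y) \<and> (\<forall>g\<in>Ar D. fa F (fa K g) = g))"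

definition pb_obj ::
  "('bo, 'ba, 'x) gpdG_scheme \<Rightarrow> ('yo, 'ya, 'y) gpdG_scheme \<Rightarrow>
   ('bo, 'ba, 'zo, 'za) fnctr \<Rightarrow> ('yo, 'ya, 'zo, 'za) fnctr \<Rightarrow> ('bo \<times> 'yo, 'ba \<times> 'ya) gpdG" where
  "pb_obj B Y G P = \<lparr>
     Ob = {(b, y). b \<in> Ob B \<and> y \<in> Ob Y \<and> fo G b = fo P y},
     Ar = {(u, v). u \<in> Ar B \<and> v \<in> Ar Y \<and> fa G u = fa P v},
     Dom = (\<lambda>(u, v). (Dom B u, Dom Y v)),
     Cod = (\<lambda>(u, v). (Cod B u, Cod Y v)),
     Idt = (\<lambda>(b, y). (Idt B b, Idt Y y)),
     Comp = (\<lambda>(u', v') (u, v). (Comp B u' u, Comp Y v' v)),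
     invo = (\<lambda>(b, y). (invo B b, invo Y y)),
     inva = (\<lambda>(u, v). (inva B u, inva Y v)) \<rparr>"

definition is_pullback_square ::
  "('eo, 'ea, 'w) gpdG_scheme \<Rightarrow> ('bo, 'ba, 'x) gpdG_scheme \<Rightarrow>
   ('yo, 'ya, 'y) gpdG_scheme \<Rightarrow> ('zo, 'za, 'z) gpdG_scheme \<Rightarrow>
   ('eo, 'ea, 'bo, 'ba) fnctr \<Rightarrow> ('eo, 'ea, 'yo, 'ya) fnctr \<Rightarrow>
   ('yo, 'ya, 'zo, 'za) fnctr \<Rightarrow> ('bo, 'ba, 'zo, 'za) fnctr \<Rightarrow> bool" where
  "is_pullback_square E B Y Z F H P G \<longleftrightarrow>
     is_morG E B F \<and> is_morG E Y H \<and> is_morG Y Z P \<and> is_morG B Z G \<and>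
     (\<forall>x\<in>Ob E. fo P (fo H x) = fo G (fo F x)) \<and>
     (\<forall>f\<in>Ar E. fa P (fa H f) = fa G (fa F f)) \<and>
     is_isoG E (pb_obj B Y G P) \<lparr>fo = (\<lambda>x. (fo F x, fo H x)), fa = (\<lambda>f. (fa F f, fa H f))\<rparr>"

definition is_pullback_of ::
  "('eo, 'ea, 'w) gpdG_scheme \<Rightarrow> ('bo, 'ba, 'x) gpdG_scheme \<Rightarrow> ('eo, 'ea, 'bo, 'ba) fnctr \<Rightarrow>
   ('yo, 'ya, 'y) gpdG_scheme \<Rightarrow> ('zo, 'za, 'z) gpdG_scheme \<Rightarrow> ('yo, 'ya, 'zo, 'za) fnctr \<Rightarrow> bool" where
  "is_pullback_of E B F Y Z P \<longleftrightarrow>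
     (\<exists>G H. is_pullback_square E B Y Z F H P G)"

definition discrete_fibration ::
  "('eo, 'ea, 'x) gpd_scheme \<Rightarrow> ('bo, 'ba, 'y) gpd_scheme \<Rightarrow> ('eo, 'ea, 'bo, 'ba) fnctr \<Rightarrow> bool" where
  "discrete_fibration E B F \<longleftrightarrow> is_functor E B F \<and>
     (\<forall>x\<in>Ob E. \<forall>h\<in>Ar B. Dom B h = fo F x \<longrightarrow>
        (\<exists>!h'. h' \<in> Ar E \<and> Dom E h' = x \<and> fa F h' = h))"

definition fiber_obj ::
  "('eo, 'ea, 'x) gpd_scheme \<Rightarrow> ('eo, 'ea, 'bo, 'ba) fnctr \<Rightarrow> 'bo \<Rightarrow> 'eo set" where
  "fiber_obj E F b = {x \<in> Ob E. fo F x = b}"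

text \<open>Sets are subsets of the type \<open>'u\<close>; \<open>\<kappa>\<close> is a cardinal on (a subset of) \<open>'u\<close>,
  so \<open>'u\<close> has at least \<open>\<kappa>\<close> elements. Bijections are represented by extensional functions.\<close>

type_synonym 'u UDob = "'u set \<times> 'u set \<times> ('u \<Rightarrow> 'u)"
type_synonym 'u UDar = "'u UDob \<times> 'u UDob \<times> ('u \<Rightarrow> 'u) \<times> ('u \<Rightarrow> 'u)"
type_synonym 'u UDtob = "'u set \<times> 'u set \<times> 'u \<times> ('u \<Rightarrow> 'u)"
type_synonym 'u UDtar = "'u UDtob \<times> 'u UDtob \<times> ('u \<Rightarrow> 'u) \<times> ('u \<Rightarrow> 'u)"

definition ext_bij :: "('u \<Rightarrow> 'u) \<Rightarrow> 'u set \<Rightarrow> 'u set \<Rightarrow> bool" where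
  "ext_bij \<phi> A B \<longleftrightarrow> bij_betw \<phi> A B \<and> \<phi> \<in> extensional A"

definition ext_inv :: "('u \<Rightarrow> 'u) \<Rightarrow> 'u set \<Rightarrow> 'u set \<Rightarrow> ('u \<Rightarrow> 'u)" where
  "ext_inv \<phi> A B = restrict (inv_into A \<phi>) B"

definition UD_objs :: "'u rel \<Rightarrow> 'u UDob set" where
  "UD_objs \<kappa> = {(A0, A1, \<phi>). |A0| <o \<kappa> \<and> |A1| <o \<kappa> \<and> ext_bij \<phi> A0 A1}"

definition U_Delta :: "'u rel \<Rightarrow> ('u UDob, 'u UDar) gpdG" where
  "U_Delta \<kappa> = \<lparr>
     Ob = UD_objs \<kappa>,
     Ar = {((A0, A1, \<phi>), (B0, B1, \<psi>), \<rho>0, \<rho>1).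
             (A0, A1, \<phi>) \<in> UD_objs \<kappa> \<and> (B0, B1, \<psi>) \<in> UD_objs \<kappa> \<and>
             ext_bij \<rho>0 A0 B0 \<and> ext_bij \<rho>1 A1 B1 \<and>
             (\<forall>a\<in>A0. \<psi> (\<rho>0 a) = \<rho>1 (\<phi> a))},
     Dom = (\<lambda>(s, t, \<rho>0, \<rho>1). s),
     Cod = (\<lambda>(s, t, \<rho>0, \<rho>1). t),
     Idt = (\<lambda>(A0, A1, \<phi>). ((A0, A1, \<phi>), (A0, A1, \<phi>), restrict id A0, restrict id A1)),
     Comp = (\<lambda>(s', t', \<sigma>0, \<sigma>1) (s, t, \<rho>0, \<rho>1).
               (s, t', compose (fst s) \<sigma>0 \<rho>0, compose (fst (snd s)) \<sigma>1 \<rho>1)),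
     invo = (\<lambda>(A0, A1, \<phi>). (A1, A0, ext_inv \<phi> A0 A1)),
     inva = (\<lambda>((A0, A1, \<phi>), (B0, B1, \<psi>), \<rho>0, \<rho>1).
               ((A1, A0, ext_inv \<phi> A0 A1), (B1, B0, ext_inv \<psi> B0 B1), \<rho>1, \<rho>0)) \<rparr>"

definition UDt_objs :: "'u rel \<Rightarrow> 'u UDtob set" where
  "UDt_objs \<kappa> = {(A0, A1, a, \<phi>). (A0, A1, \<phi>) \<in> UD_objs \<kappa> \<and> a \<in> A0}"

definition U_Delta_tilde :: "'u rel \<Rightarrow> ('u UDtob, 'u UDtar) gpdG" where
  "U_Delta_tilde \<kappa> = \<lparr>
     Ob = UDt_objs \<kappa>,
     Ar = {((A0, A1, a, \<phi>), (B0, B1, b, \<psi>), \<rho>0, \<rho>1).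
             (A0, A1, a, \<phi>) \<in> UDt_objs \<kappa> \<and> (B0, B1, b, \<psi>) \<in> UDt_objs \<kappa> \<and>
             ext_bij \<rho>0 A0 B0 \<and> ext_bij \<rho>1 A1 B1 \<and>
             (\<forall>x\<in>A0. \<psi> (\<rho>0 x) = \<rho>1 (\<phi> x)) \<and> \<rho>0 a = b},
     Dom = (\<lambda>(s, t, \<rho>0, \<rho>1). s),
     Cod = (\<lambda>(s, t, \<rho>0, \<rho>1). t),
     Idt = (\<lambda>(A0, A1, a, \<phi>). ((A0, A1, a, \<phi>), (A0, A1, a, \<phi>), restrict id A0, restrict id A1)),
     Comp = (\<lambda>(s', t', \<sigma>0, \<sigma>1) (s, t, \<rho>0, \<rho>1).
               (s, t', compose (fst s) \<sigma>0 \<rho>0, compose (fst (snd s)) \<sigma>1 \<rho>1)),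
     invo = (\<lambda>(A0, A1, a, \<phi>). (A1, A0, \<phi> a, ext_inv \<phi> A0 A1)),
     inva = (\<lambda>((A0, A1, a, \<phi>), (B0, B1, b, \<psi>), \<rho>0, \<rho>1).
               ((A1, A0, \<phi> a, ext_inv \<phi> A0 A1), (B1, B0, \<psi> b, ext_inv \<psi> B0 B1), \<rho>1, \<rho>0)) \<rparr>"

definition p_Delta :: "('u UDtob, 'u UDtar, 'u UDob, 'u UDar) fnctr" where
  "p_Delta = \<lparr>
     fo = (\<lambda>(A0, A1, a, \<phi>). (A0, A1, \<phi>)),
     fa = (\<lambda>((A0, A1, a, \<phi>), (B0, B1, b, \<psi>), \<rho>0, \<rho>1). ((A0, A1, \<phi>), (B0, B1, \<psi>), \<rho>0, \<rho>1)) \<rparr>"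

end

theory Submission
  imports Defs
begin

text \<open>
  Only if: discrete fibrations are stable under pullback, and the comparison isomorphism
  embeds each fiber of a pullback of \<open>p_\<Delta>\<close> into a fiber of \<open>p_\<Delta>\<close>, i.e. into a set \<open>A0\<close>
  of size \<open><\<kappa>\<close>.

  If: code each fiber \<open>F\<^sup>-\<^sup>1(b)\<close> injectively by a set \<open>codes b\<close> of elements of the universe
  type. The involution of \<open>E\<close> induces a bijection \<open>codes b \<rightarrow> codes (invo B b)\<close>, and the unique
  lifts of an arrow \<open>h\<close> of \<open>B\<close> induce a transport bijection between the codes of the fibers
  over its ends. This is a morphism \<open>B \<rightarrow> U_\<Delta>\<close>, and pointing \<open>codes (F x)\<close> at the code of
  \<open>x\<close> lifts it to \<open>E \<rightarrow> \<tilde>U_\<Delta>\<close>. The comparison map from \<open>E\<close> to the resulting pullback is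
  bijective on objects because codes decode uniquely, and on arrows because lifts are unique.
\<close>

section \<open>Groupoids, pullbacks and discrete fibrations\<close>

lemma gpd_Dom_in: "is_gpd C \<Longrightarrow> f \<in> Ar C \<Longrightarrow> Dom C f \<in> Ob C"
  and gpd_Cod_in: "is_gpd C \<Longrightarrow> f \<in> Ar C \<Longrightarrow> Cod C f \<in> Ob C"
  and gpd_Idt_in: "is_gpd C \<Longrightarrow> x \<in> Ob C \<Longrightarrow> Idt C x \<in> Ar C"
  and gpd_Dom_Idt: "is_gpd C \<Longrightarrow> x \<in> Ob C \<Longrightarrow> Dom C (Idt C x) = x"
  and gpd_Cod_Idt: "is_gpd C \<Longrightarrow> x \<in> Ob C \<Longrightarrow> Cod C (Idt C x) = x"
  and gpd_Comp_in: "is_gpd C \<Longrightarrow> f \<in> Ar C \<Longrightarrow> g \<in> Ar C \<Longrightarrow> Cod C f = Dom C g \<Longrightarrow> Comp C g f \<in> Ar C"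
  and gpd_Dom_Comp: "is_gpd C \<Longrightarrow> f \<in> Ar C \<Longrightarrow> g \<in> Ar C \<Longrightarrow> Cod C f = Dom C g \<Longrightarrow>
    Dom C (Comp C g f) = Dom C f"
  and gpd_Cod_Comp: "is_gpd C \<Longrightarrow> f \<in> Ar C \<Longrightarrow> g \<in> Ar C \<Longrightarrow> Cod C f = Dom C g \<Longrightarrow>
    Cod C (Comp C g f) = Cod C g"
  and gpd_Comp_assoc: "is_gpd C \<Longrightarrow> f \<in> Ar C \<Longrightarrow> g \<in> Ar C \<Longrightarrow> h \<in> Ar C \<Longrightarrow>
    Cod C f = Dom C g \<Longrightarrow> Cod C g = Dom C h \<Longrightarrow> Comp C h (Comp C g f) = Comp C (Comp C h g) f"
  and gpd_Comp_Idt_right: "is_gpd C \<Longrightarrow> f \<in> Ar C \<Longrightarrow> Comp C f (Idt C (Dom C f)) = f"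
  and gpd_Comp_Idt_left: "is_gpd C \<Longrightarrow> f \<in> Ar C \<Longrightarrow> Comp C (Idt C (Cod C f)) f = f"
  unfolding is_gpd_def by blast+

definition is_inverse :: "('o, 'a, 'x) gpd_scheme \<Rightarrow> 'a \<Rightarrow> 'a \<Rightarrow> bool" where
  "is_inverse C g f \<longleftrightarrow> g \<in> Ar C \<and> Dom C g = Cod C f \<and> Cod C g = Dom C f \<and>
     Comp C g f = Idt C (Dom C f) \<and> Comp C f g = Idt C (Cod C f)"

lemma gpd_inverse_ex: "is_gpd C \<Longrightarrow> f \<in> Ar C \<Longrightarrow> \<exists>g. is_inverse C g f"
  unfolding is_gpd_def is_inverse_def by blast

lemma gpd_inverse_unique:
  assumes C: "is_gpd C" and f: "f \<in> Ar C" and "is_inverse C g f" "is_inverse C g' f"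
  shows "g = g'"
proof -
  have g: "g \<in> Ar C" "Dom C g = Cod C f" "Comp C g f = Idt C (Dom C f)"
    and g': "g' \<in> Ar C" "Cod C g' = Dom C f" "Comp C f g' = Idt C (Cod C f)"
    using assms(3,4) by (simp_all add: is_inverse_def)
  have "g = Comp C g (Comp C f g')" using gpd_Comp_Idt_right[OF C g(1)] g(2) g'(3) by simp
  also have "\<dots> = Comp C (Comp C g f) g'" using gpd_Comp_assoc[OF C g'(1) f g(1)] g(2) g'(2) by simp
  also have "\<dots> = g'" using gpd_Comp_Idt_left[OF C g'(1)] g(3) g'(2) by simp
  finally show ?thesis .
qed

lemma is_gpdI:
  assumes "\<And>f. f \<in> Ar C \<Longrightarrow> Dom C f \<in> Ob C \<and> Cod C f \<in> Ob C"
    "\<And>x. x \<in> Ob C \<Longrightarrow> Idt C x \<in> Ar C \<and> Dom C (Idt C x) = x \<and> Cod C (Idt C x) = x"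
    "\<And>f g. f \<in> Ar C \<Longrightarrow> g \<in> Ar C \<Longrightarrow> Cod C f = Dom C g \<Longrightarrow>
        Comp C g f \<in> Ar C \<and> Dom C (Comp C g f) = Dom C f \<and> Cod C (Comp C g f) = Cod C g"
    "\<And>f g h. f \<in> Ar C \<Longrightarrow> g \<in> Ar C \<Longrightarrow> h \<in> Ar C \<Longrightarrow> Cod C f = Dom C g \<Longrightarrow>
        Cod C g = Dom C h \<Longrightarrow> Comp C h (Comp C g f) = Comp C (Comp C h g) f"
    "\<And>f. f \<in> Ar C \<Longrightarrow> Comp C f (Idt C (Dom C f)) = f \<and> Comp C (Idt C (Cod C f)) f = f"
    "\<And>f. f \<in> Ar C \<Longrightarrow> \<exists>g. is_inverse C g f"
  shows "is_gpd C"
proof -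
  have "\<exists>g\<in>Ar C. Dom C g = Cod C f \<and> Cod C g = Dom C f \<and>
      Comp C g f = Idt C (Dom C f) \<and> Comp C f g = Idt C (Cod C f)" if "f \<in> Ar C" for f
    using assms(6)[OF that] unfolding is_inverse_def by blast
  then show ?thesis using assms(1-5) unfolding is_gpd_def by blast
qed

lemma functor_fo_in: "is_functor C D F \<Longrightarrow> x \<in> Ob C \<Longrightarrow> fo F x \<in> Ob D"
  and functor_fa_in: "is_functor C D F \<Longrightarrow> f \<in> Ar C \<Longrightarrow> fa F f \<in> Ar D"
  and functor_Dom: "is_functor C D F \<Longrightarrow> f \<in> Ar C \<Longrightarrow> Dom D (fa F f) = fo F (Dom C f)"
  and functor_Cod: "is_functor C D F \<Longrightarrow> f \<in> Ar C \<Longrightarrow> Cod D (fa F f) = fo F (Cod C f)"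
  and functor_Idt: "is_functor C D F \<Longrightarrow> x \<in> Ob C \<Longrightarrow> fa F (Idt C x) = Idt D (fo F x)"
  and functor_Comp: "is_functor C D F \<Longrightarrow> f \<in> Ar C \<Longrightarrow> g \<in> Ar C \<Longrightarrow> Cod C f = Dom C g \<Longrightarrow>
    fa F (Comp C g f) = Comp D (fa F g) (fa F f)"
  unfolding is_functor_def by blast+

lemma is_functorI:
  assumes "\<And>x. x \<in> Ob C \<Longrightarrow> fo F x \<in> Ob D"
    "\<And>f. f \<in> Ar C \<Longrightarrow> fa F f \<in> Ar D \<and> Dom D (fa F f) = fo F (Dom C f) \<and> Cod D (fa F f) = fo F (Cod C f)"
    "\<And>x. x \<in> Ob C \<Longrightarrow> fa F (Idt C x) = Idt D (fo F x)"
    "\<And>f g. f \<in> Ar C \<Longrightarrow> g \<in> Ar C \<Longrightarrow> Cod C f = Dom C g \<Longrightarrow>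
      fa F (Comp C g f) = Comp D (fa F g) (fa F f)"
  shows "is_functor C D F"
  using assms unfolding is_functor_def by blast

lemma functor_is_inverse:
  assumes F: "is_functor C D F" and C: "is_gpd C" and f: "f \<in> Ar C" and g: "is_inverse C g f"
  shows "is_inverse D (fa F g) (fa F f)"
proof -
  have g': "g \<in> Ar C" "Dom C g = Cod C f" "Cod C g = Dom C f"
    "Comp C g f = Idt C (Dom C f)" "Comp C f g = Idt C (Cod C f)"
    using g by (simp_all add: is_inverse_def)
  have "fa F (Comp C g f) = Comp D (fa F g) (fa F f)" "fa F (Comp C f g) = Comp D (fa F f) (fa F g)"
    using functor_Comp[OF F f g'(1)] functor_Comp[OF F g'(1) f] g'(2,3) by simp_all
  then show ?thesis
    using g' F C f
    by (simp add: is_inverse_def functor_fa_in functor_Dom functor_Cod functor_Idt gpd_Dom_in gpd_Cod_in)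
qed

lemma gpdG_is_gpd: "is_gpdG C \<Longrightarrow> is_gpd C"
  and gpdG_functor: "is_gpdG C \<Longrightarrow> is_functor C C (inv_fnctr C)"
  and gpdG_invo_invo: "is_gpdG C \<Longrightarrow> x \<in> Ob C \<Longrightarrow> invo C (invo C x) = x"
  and gpdG_inva_inva: "is_gpdG C \<Longrightarrow> f \<in> Ar C \<Longrightarrow> inva C (inva C f) = f"
  unfolding is_gpdG_def by blast+

lemma inv_fnctr_simps [simp]: "fo (inv_fnctr C) = invo C" "fa (inv_fnctr C) = inva C"
  by (simp_all add: inv_fnctr_def)

lemma gpdG_invo_in: "is_gpdG C \<Longrightarrow> x \<in> Ob C \<Longrightarrow> invo C x \<in> Ob C"
  and gpdG_inva_in: "is_gpdG C \<Longrightarrow> f \<in> Ar C \<Longrightarrow> inva C f \<in> Ar C"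
  and gpdG_Dom_inva: "is_gpdG C \<Longrightarrow> f \<in> Ar C \<Longrightarrow> Dom C (inva C f) = invo C (Dom C f)"
  and gpdG_Cod_inva: "is_gpdG C \<Longrightarrow> f \<in> Ar C \<Longrightarrow> Cod C (inva C f) = invo C (Cod C f)"
  and gpdG_inva_Idt: "is_gpdG C \<Longrightarrow> x \<in> Ob C \<Longrightarrow> inva C (Idt C x) = Idt C (invo C x)"
  and gpdG_inva_Comp: "is_gpdG C \<Longrightarrow> f \<in> Ar C \<Longrightarrow> g \<in> Ar C \<Longrightarrow> Cod C f = Dom C g \<Longrightarrow>
    inva C (Comp C g f) = Comp C (inva C g) (inva C f)"
  using functor_fo_in[OF gpdG_functor] functor_fa_in[OF gpdG_functor] functor_Dom[OF gpdG_functor]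
    functor_Cod[OF gpdG_functor] functor_Idt[OF gpdG_functor] functor_Comp[OF gpdG_functor]
  by simp_all

lemma is_gpdGI:
  assumes "is_gpd C" "is_functor C C (inv_fnctr C)"
    "\<And>x. x \<in> Ob C \<Longrightarrow> invo C (invo C x) = x" "\<And>f. f \<in> Ar C \<Longrightarrow> inva C (inva C f) = f"
  shows "is_gpdG C"
  using assms unfolding is_gpdG_def by blast

lemma morG_gpdG_dom: "is_morG C D F \<Longrightarrow> is_gpdG C"
  and morG_gpdG_cod: "is_morG C D F \<Longrightarrow> is_gpdG D"
  and morG_functor: "is_morG C D F \<Longrightarrow> is_functor C D F"
  and morG_invo: "is_morG C D F \<Longrightarrow> x \<in> Ob C \<Longrightarrow> fo F (invo C x) = invo D (fo F x)"
  and morG_inva: "is_morG C D F \<Longrightarrow> f \<in> Ar C \<Longrightarrow> fa F (inva C f) = inva D (fa F f)"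
  unfolding is_morG_def by blast+

lemma is_morGI:
  assumes "is_gpdG C" "is_gpdG D" "is_functor C D F"
    "\<And>x. x \<in> Ob C \<Longrightarrow> fo F (invo C x) = invo D (fo F x)"
    "\<And>f. f \<in> Ar C \<Longrightarrow> fa F (inva C f) = inva D (fa F f)"
  shows "is_morG C D F"
  using assms unfolding is_morG_def by blast

lemma pb_obj_simps:
  "(b, y) \<in> Ob (pb_obj B Y G P) \<longleftrightarrow> b \<in> Ob B \<and> y \<in> Ob Y \<and> fo G b = fo P y"
  "(u, v) \<in> Ar (pb_obj B Y G P) \<longleftrightarrow> u \<in> Ar B \<and> v \<in> Ar Y \<and> fa G u = fa P v"
  "Dom (pb_obj B Y G P) (u, v) = (Dom B u, Dom Y v)"
  "Cod (pb_obj B Y G P) (u, v) = (Cod B u, Cod Y v)"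
  "Idt (pb_obj B Y G P) (b, y) = (Idt B b, Idt Y y)"
  "Comp (pb_obj B Y G P) (u', v') (u, v) = (Comp B u' u, Comp Y v' v)"
  "invo (pb_obj B Y G P) (b, y) = (invo B b, invo Y y)"
  "inva (pb_obj B Y G P) (u, v) = (inva B u, inva Y v)"
  by (simp_all add: pb_obj_def)

lemma pb_obj_ObE:
  assumes "p \<in> Ob (pb_obj B Y G P)"
  obtains b y where "p = (b, y)" "b \<in> Ob B" "y \<in> Ob Y" "fo G b = fo P y"
  using assms by (cases p) (simp add: pb_obj_simps)

lemma pb_obj_ArE:
  assumes "q \<in> Ar (pb_obj B Y G P)"
  obtains u v where "q = (u, v)" "u \<in> Ar B" "v \<in> Ar Y" "fa G u = fa P v"
  using assms by (cases q) (simp add: pb_obj_simps)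

lemma pb_obj_is_gpdG:
  assumes G: "is_morG B Z G" and P: "is_morG Y Z P"
  shows "is_gpdG (pb_obj B Y G P)"
proof -
  let ?Q = "pb_obj B Y G P"
  have B: "is_gpdG B" and Y: "is_gpdG Y" and Z: "is_gpd Z"
    using G P by (simp_all add: morG_gpdG_dom morG_gpdG_cod gpdG_is_gpd)
  have Bg: "is_gpd B" and Yg: "is_gpd Y" using B Y by (simp_all add: gpdG_is_gpd)
  have Gf: "is_functor B Z G" and Pf: "is_functor Y Z P" using G P by (simp_all add: morG_functor)
  note laws = pb_obj_simps gpd_Dom_in gpd_Cod_in gpd_Idt_in gpd_Dom_Idt gpd_Cod_Idt gpd_Comp_in
    gpd_Dom_Comp gpd_Cod_Comp gpd_Comp_assoc gpd_Comp_Idt_left gpd_Comp_Idt_right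
    functor_fo_in functor_fa_in functor_Dom functor_Cod functor_Idt functor_Comp
  have "is_gpd ?Q"
  proof (rule is_gpdI)
    fix q assume "q \<in> Ar ?Q"
    then obtain u v where q: "q = (u, v)" "u \<in> Ar B" "v \<in> Ar Y" and uv: "fa G u = fa P v"
      by (rule pb_obj_ArE)
    then show "Dom ?Q q \<in> Ob ?Q \<and> Cod ?Q q \<in> Ob ?Q"
      using functor_Dom[OF Gf q(2)] functor_Dom[OF Pf q(3)] functor_Cod[OF Gf q(2)] functor_Cod[OF Pf q(3)]
      by (simp add: pb_obj_simps gpd_Dom_in[OF Bg] gpd_Cod_in[OF Bg] gpd_Dom_in[OF Yg] gpd_Cod_in[OF Yg])
  next
    fix q assume "q \<in> Ar ?Q"
    then obtain u v where q: "q = (u, v)" "u \<in> Ar B" "v \<in> Ar Y" and uv: "fa G u = fa P v"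
      by (rule pb_obj_ArE)
    obtain u' v' where u': "is_inverse B u' u" and v': "is_inverse Y v' v"
      using gpd_inverse_ex[OF Bg q(2)] gpd_inverse_ex[OF Yg q(3)] by blast
    have "fa G u' = fa P v'"
      using functor_is_inverse[OF Gf Bg q(2) u'] functor_is_inverse[OF Pf Yg q(3) v'] uv
        gpd_inverse_unique[OF Z functor_fa_in[OF Gf q(2)]] by simp
    then show "\<exists>q'. is_inverse ?Q q' q"
      using q u' v' by (intro exI[of _ "(u', v')"]) (auto simp: is_inverse_def pb_obj_simps)
  qed (use Bg Yg Gf Pf in \<open>auto elim!: pb_obj_ArE pb_obj_ObE simp: laws\<close>)
  moreover have "is_functor ?Q ?Q (inv_fnctr ?Q)"
    by (rule is_functorI)
      (use B Y G P in \<open>auto elim!: pb_obj_ArE pb_obj_ObE simp: pb_obj_simps gpdG_invo_in gpdG_inva_in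
        gpdG_Dom_inva gpdG_Cod_inva gpdG_inva_Idt gpdG_inva_Comp morG_invo morG_inva\<close>)
  ultimately show ?thesis
    using B Y by (intro is_gpdGI) (auto elim!: pb_obj_ArE pb_obj_ObE simp: pb_obj_simps gpdG_invo_invo gpdG_inva_inva)
qed

abbreviation pair_fnctr ::
  "('eo, 'ea, 'bo, 'ba) fnctr \<Rightarrow> ('eo, 'ea, 'yo, 'ya) fnctr \<Rightarrow> ('eo, 'ea, 'bo \<times> 'yo, 'ba \<times> 'ya) fnctr" where
  "pair_fnctr F H \<equiv> \<lparr>fo = (\<lambda>x. (fo F x, fo H x)), fa = (\<lambda>f. (fa F f, fa H f))\<rparr>"

lemma pair_fnctr_morG:
  assumes F: "is_morG E B F" and H: "is_morG E Y H" and G: "is_morG B Z G" and P: "is_morG Y Z P"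
    and "\<forall>x\<in>Ob E. fo P (fo H x) = fo G (fo F x)" and "\<forall>f\<in>Ar E. fa P (fa H f) = fa G (fa F f)"
  shows "is_morG E (pb_obj B Y G P) (pair_fnctr F H)"
proof (rule is_morGI)
  have Ff: "is_functor E B F" and Hf: "is_functor E Y H" using F H by (simp_all add: morG_functor)
  show "is_functor E (pb_obj B Y G P) (pair_fnctr F H)"
    by (rule is_functorI)
      (use assms(5,6) Ff Hf in \<open>auto simp: pb_obj_simps functor_fo_in functor_fa_in functor_Dom
        functor_Cod functor_Idt functor_Comp\<close>)
qed (use F H G P in \<open>auto simp: pb_obj_simps pb_obj_is_gpdG morG_gpdG_dom morG_invo morG_inva\<close>)

lemma inv_into_morG:
  assumes F: "is_morG C D F" and bo: "bij_betw (fo F) (Ob C) (Ob D)" and ba: "bij_betw (fa F) (Ar C) (Ar D)"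
  shows "is_morG D C \<lparr>fo = inv_into (Ob C) (fo F), fa = inv_into (Ar C) (fa F)\<rparr>"
proof -
  define K where "K = \<lparr>fo = inv_into (Ob C) (fo F), fa = inv_into (Ar C) (fa F)\<rparr>"
  have C: "is_gpdG C" and D: "is_gpdG D" and Ff: "is_functor C D F"
    using F by (simp_all add: morG_gpdG_dom morG_gpdG_cod morG_functor)
  have Ko: "fo K y \<in> Ob C" "fo F (fo K y) = y" if "y \<in> Ob D" for y
    using that bo by (auto simp: K_def bij_betw_def inv_into_into f_inv_into_f)
  have Ka: "fa K g \<in> Ar C" "fa F (fa K g) = g" if "g \<in> Ar D" for g
    using that ba by (auto simp: K_def bij_betw_def inv_into_into f_inv_into_f)
  have Ko_eq: "fo K y = x" if "x \<in> Ob C" "fo F x = y" for x y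
    using that bo by (simp add: K_def bij_betw_def inv_into_f_eq)
  have Ka_eq: "fa K g = f" if "f \<in> Ar C" "fa F f = g" for f g
    using that ba by (simp add: K_def bij_betw_def inv_into_f_eq)
  have "is_morG D C K"
  proof (rule is_morGI[OF D C])
    show "is_functor D C K"
    proof (rule is_functorI)
      fix g assume g: "g \<in> Ar D"
      show "fa K g \<in> Ar C \<and> Dom C (fa K g) = fo K (Dom D g) \<and> Cod C (fa K g) = fo K (Cod D g)"
        using Ka[OF g] functor_Dom[OF Ff, of "fa K g"] functor_Cod[OF Ff, of "fa K g"]
        by (auto intro!: Ko_eq[symmetric] gpd_Dom_in gpd_Cod_in gpdG_is_gpd[OF C])
    next
      fix y assume y: "y \<in> Ob D"
      show "fa K (Idt D y) = Idt C (fo K y)"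
        using Ko[OF y] by (intro Ka_eq) (simp_all add: functor_Idt[OF Ff] gpd_Idt_in gpdG_is_gpd[OF C])
    next
      fix g g' assume g: "g \<in> Ar D" and g': "g' \<in> Ar D" and gg': "Cod D g = Dom D g'"
      have "Cod C (fa K g) = Dom C (fa K g')"
        using Ka[OF g] Ka[OF g'] gg' functor_Dom[OF Ff, of "fa K g'"] functor_Cod[OF Ff, of "fa K g"]
          gpd_Dom_in gpd_Cod_in gpdG_is_gpd[OF C] Ko_eq by metis
      then show "fa K (Comp D g' g) = Comp C (fa K g') (fa K g)"
        using Ka[OF g] Ka[OF g']
        by (intro Ka_eq) (simp_all add: functor_Comp[OF Ff] gpd_Comp_in gpdG_is_gpd[OF C])
    qed (use Ko in blast)
  qed (use Ko Ka Ko_eq Ka_eq morG_invo[OF F] morG_inva[OF F] gpdG_invo_in[OF C] gpdG_inva_in[OF C] in simp_all)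
  then show ?thesis by (simp add: K_def)
qed

lemma is_isoG_iff_bij:
  "is_isoG C D F \<longleftrightarrow> is_morG C D F \<and> bij_betw (fo F) (Ob C) (Ob D) \<and> bij_betw (fa F) (Ar C) (Ar D)"
proof
  assume "is_isoG C D F"
  then obtain K where F: "is_morG C D F" and K: "is_morG D C K"
    and "\<forall>x\<in>Ob C. fo K (fo F x) = x" "\<forall>f\<in>Ar C. fa K (fa F f) = f"
      "\<forall>y\<in>Ob D. fo F (fo K y) = y" "\<forall>g\<in>Ar D. fa F (fa K g) = g"
    unfolding is_isoG_def by blast
  moreover have "fo F ` Ob C \<subseteq> Ob D" "fa F ` Ar C \<subseteq> Ar D" "fo K ` Ob D \<subseteq> Ob C" "fa K ` Ar D \<subseteq> Ar C"
    using morG_functor[OF F] morG_functor[OF K] by (auto simp: functor_fo_in functor_fa_in)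
  ultimately show "is_morG C D F \<and> bij_betw (fo F) (Ob C) (Ob D) \<and> bij_betw (fa F) (Ar C) (Ar D)"
    by (auto intro!: bij_betw_byWitness)
next
  assume "is_morG C D F \<and> bij_betw (fo F) (Ob C) (Ob D) \<and> bij_betw (fa F) (Ar C) (Ar D)"
  then show "is_isoG C D F"
    unfolding is_isoG_def using inv_into_morG
    by (auto simp: bij_betw_def inv_into_f_f f_inv_into_f intro!: exI[of _
        "\<lparr>fo = inv_into (Ob C) (fo F), fa = inv_into (Ar C) (fa F)\<rparr>"])
qed

lemma is_pullback_square_iff:
  "is_pullback_square E B Y Z F H P G \<longleftrightarrow>
     is_morG E B F \<and> is_morG E Y H \<and> is_morG Y Z P \<and> is_morG B Z G \<and>
     (\<forall>x\<in>Ob E. fo P (fo H x) = fo G (fo F x)) \<and> (\<forall>f\<in>Ar E. fa P (fa H f) = fa G (fa F f)) \<and>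
     bij_betw (fo (pair_fnctr F H)) (Ob E) (Ob (pb_obj B Y G P)) \<and>
     bij_betw (fa (pair_fnctr F H)) (Ar E) (Ar (pb_obj B Y G P))"
  unfolding is_pullback_square_def is_isoG_iff_bij by (auto intro: pair_fnctr_morG)

lemma discrete_fibration_lift:
  "discrete_fibration E B F \<Longrightarrow> x \<in> Ob E \<Longrightarrow> h \<in> Ar B \<Longrightarrow> Dom B h = fo F x \<Longrightarrow>
    \<exists>k. k \<in> Ar E \<and> Dom E k = x \<and> fa F k = h"
  unfolding discrete_fibration_def by blast

lemma discrete_fibration_unique:
  assumes "discrete_fibration E B F" "is_gpd E" "k \<in> Ar E" "k' \<in> Ar E"
    "Dom E k = Dom E k'" "fa F k = fa F k'"
  shows "k = k'"
proof -
  have "Dom B (fa F k) = fo F (Dom E k)" "fa F k \<in> Ar B"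
    using assms(1,3) unfolding discrete_fibration_def by (auto simp: functor_Dom functor_fa_in)
  then show ?thesis
    using assms gpd_Dom_in[OF assms(2,3)] unfolding discrete_fibration_def by metis
qed

lemma discrete_fibration_pullback:
  assumes sq: "is_pullback_square E B Y Z F H P G" and P: "discrete_fibration Y Z P"
  shows "discrete_fibration E B F"
  unfolding discrete_fibration_def
proof (intro conjI ballI impI)
  let ?Q = "pb_obj B Y G P" and ?C = "pair_fnctr F H"
  have Ff: "is_functor E B F" and Hf: "is_functor E Y H" and Gf: "is_functor B Z G"
    and co: "\<forall>x\<in>Ob E. fo P (fo H x) = fo G (fo F x)" and ca: "\<forall>f\<in>Ar E. fa P (fa H f) = fa G (fa F f)"
    and bo: "bij_betw (fo ?C) (Ob E) (Ob ?Q)" and ba: "bij_betw (fa ?C) (Ar E) (Ar ?Q)"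
    using sq by (simp_all add: is_pullback_square_iff morG_functor)
  have Eg: "is_gpd E" and Yg: "is_gpd Y"
    using sq unfolding is_pullback_square_def by (meson gpdG_is_gpd morG_gpdG_dom)+
  show "is_functor E B F" by fact
  fix x h assume x: "x \<in> Ob E" and h: "h \<in> Ar B" and hx: "Dom B h = fo F x"
  have "Dom Z (fa G h) = fo P (fo H x)" using functor_Dom[OF Gf h] hx co x by simp
  then obtain v where v: "v \<in> Ar Y" "Dom Y v = fo H x" "fa P v = fa G h"
    using discrete_fibration_lift[OF P functor_fo_in[OF Hf x] functor_fa_in[OF Gf h]] by blast
  then have "(h, v) \<in> fa ?C ` Ar E" using h ba by (simp add: pb_obj_simps bij_betw_def)
  then obtain k where k: "k \<in> Ar E" "fa F k = h" "fa H k = v" by force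
  have "fo ?C (Dom E k) = fo ?C x"
    using k v hx functor_Dom[OF Ff k(1)] functor_Dom[OF Hf k(1)] by simp
  moreover have "Dom E k \<in> Ob E" using gpd_Dom_in[OF Eg k(1)] .
  ultimately have dk: "Dom E k = x"
    using bo x unfolding bij_betw_def by (blast dest: inj_onD)
  show "\<exists>!k. k \<in> Ar E \<and> Dom E k = x \<and> fa F k = h"
  proof (intro ex1I[of _ k])
    fix k' assume k': "k' \<in> Ar E \<and> Dom E k' = x \<and> fa F k' = h"
    have "fa H k' = v"
      using k' v ca functor_fa_in[OF Hf] functor_Dom[OF Hf]
      by (intro discrete_fibration_unique[OF P Yg]) auto
    then show "k' = k" using ba k k' by (auto simp: bij_betw_def inj_on_def)
  qed (use k dk in blast)
qed

lemma card_fiber_pullback_le: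
  assumes sq: "is_pullback_square E B Y Z F H P G"
  shows "|fiber_obj E F b| \<le>o |fiber_obj Y P (fo G b)|"
proof -
  have Hf: "is_functor E Y H" and co: "\<forall>x\<in>Ob E. fo P (fo H x) = fo G (fo F x)"
    and bo: "bij_betw (fo (pair_fnctr F H)) (Ob E) (Ob (pb_obj B Y G P))"
    using sq by (simp_all add: is_pullback_square_iff morG_functor)
  have "inj_on (fo H) (fiber_obj E F b)"
    using bo by (auto simp: fiber_obj_def bij_betw_def inj_on_def)
  moreover have "fo H ` fiber_obj E F b \<subseteq> fiber_obj Y P (fo G b)"
    using co functor_fo_in[OF Hf] by (auto simp: fiber_obj_def)
  ultimately show ?thesis using card_of_ordLeq by blast
qed

section \<open>Extensional bijections and the universe \<open>U_\<Delta>\<close>\<close>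

lemma ext_bij_restrict_id: "ext_bij (restrict id A) A A"
  unfolding ext_bij_def by (auto simp: bij_betw_def inj_on_def)

lemma ext_bij_compose: "ext_bij \<rho> A B \<Longrightarrow> ext_bij \<sigma> B C \<Longrightarrow> ext_bij (compose A \<sigma> \<rho>) A C"
proof -
  assume "ext_bij \<rho> A B" "ext_bij \<sigma> B C"
  then have "bij_betw (\<sigma> \<circ> \<rho>) A C" unfolding ext_bij_def using bij_betw_trans by blast
  then have "bij_betw (compose A \<sigma> \<rho>) A C" by (rule bij_betw_cong[THEN iffD1, rotated]) (simp add: compose_def)
  then show ?thesis unfolding ext_bij_def by (simp add: compose_def)
qed

lemma ext_bij_ext_inv: "ext_bij \<phi> A B \<Longrightarrow> ext_bij (ext_inv \<phi> A B) B A"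
proof -
  assume "ext_bij \<phi> A B"
  then have "bij_betw (inv_into A \<phi>) B A" unfolding ext_bij_def by (simp add: bij_betw_inv_into)
  then have "bij_betw (restrict (inv_into A \<phi>) B) B A" by (rule bij_betw_cong[THEN iffD1, rotated]) simp
  then show ?thesis unfolding ext_bij_def ext_inv_def by simp
qed

lemma ext_bij_in: "ext_bij \<phi> A B \<Longrightarrow> a \<in> A \<Longrightarrow> \<phi> a \<in> B"
  unfolding ext_bij_def bij_betw_def by auto

lemma ext_bij_funcset: "ext_bij \<phi> A B \<Longrightarrow> \<phi> \<in> A \<rightarrow> B"
  by (auto simp: ext_bij_in)

lemma ext_inv_apply: "ext_bij \<phi> A B \<Longrightarrow> a \<in> A \<Longrightarrow> ext_inv \<phi> A B (\<phi> a) = a"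
  unfolding ext_bij_def ext_inv_def bij_betw_def by (auto simp: inv_into_f_f)

lemma apply_ext_inv: "ext_bij \<phi> A B \<Longrightarrow> b \<in> B \<Longrightarrow> \<phi> (ext_inv \<phi> A B b) = b"
  unfolding ext_bij_def ext_inv_def bij_betw_def by (auto simp: f_inv_into_f)

lemma ext_inv_in: "ext_bij \<phi> A B \<Longrightarrow> b \<in> B \<Longrightarrow> ext_inv \<phi> A B b \<in> A"
  unfolding ext_bij_def ext_inv_def bij_betw_def by (auto simp: inv_into_into)

lemma ext_inv_unique:
  assumes "ext_bij \<phi> A B" "\<psi> \<in> extensional B" "\<And>a. a \<in> A \<Longrightarrow> \<psi> (\<phi> a) = a"
  shows "ext_inv \<phi> A B = \<psi>"
proof (rule extensionalityI[of _ B])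
  show "ext_inv \<phi> A B \<in> extensional B" by (simp add: ext_inv_def)
  fix b assume "b \<in> B"
  then show "ext_inv \<phi> A B b = \<psi> b"
    using assms by (metis apply_ext_inv ext_inv_in)
qed (fact assms(2))

lemma ext_inv_ext_inv: "ext_bij \<phi> A B \<Longrightarrow> ext_inv (ext_inv \<phi> A B) B A = \<phi>"
  by (rule ext_inv_unique[OF ext_bij_ext_inv]) (simp_all add: apply_ext_inv ext_bij_def)

lemma compose_restrict_id_left: "ext_bij \<rho> A B \<Longrightarrow> compose A (restrict id B) \<rho> = \<rho>"
  by (rule extensionalityI[of _ A]) (auto simp: compose_def ext_bij_in ext_bij_def)

lemma compose_restrict_id_right: "ext_bij \<rho> A B \<Longrightarrow> compose A \<rho> (restrict id A) = \<rho>"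
  by (rule extensionalityI[of _ A]) (auto simp: compose_def ext_bij_def)

lemma compose_ext_inv_left: "ext_bij \<phi> A B \<Longrightarrow> compose A (ext_inv \<phi> A B) \<phi> = restrict id A"
  by (rule extensionalityI[of _ A]) (auto simp: compose_def ext_inv_apply)

lemma compose_ext_inv_right: "ext_bij \<phi> A B \<Longrightarrow> compose B \<phi> (ext_inv \<phi> A B) = restrict id B"
  by (rule extensionalityI[of _ B]) (auto simp: compose_def apply_ext_inv)

fun bij_hom :: "'u UDob \<Rightarrow> 'u UDob \<Rightarrow> ('u \<Rightarrow> 'u) \<Rightarrow> ('u \<Rightarrow> 'u) \<Rightarrow> bool" where
  "bij_hom (A0, A1, \<phi>) (B0, B1, \<psi>) \<rho>0 \<rho>1 \<longleftrightarrow>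
     ext_bij \<rho>0 A0 B0 \<and> ext_bij \<rho>1 A1 B1 \<and> (\<forall>a\<in>A0. \<psi> (\<rho>0 a) = \<rho>1 (\<phi> a))"

lemma bij_hom_commute:
  "bij_hom (A0, A1, \<phi>) (B0, B1, \<psi>) \<rho>0 \<rho>1 \<Longrightarrow> a \<in> A0 \<Longrightarrow> \<psi> (\<rho>0 a) = \<rho>1 (\<phi> a)"
  by simp

lemma bij_hom_id: "ext_bij \<phi> A0 A1 \<Longrightarrow> bij_hom (A0, A1, \<phi>) (A0, A1, \<phi>) (restrict id A0) (restrict id A1)"
  by (simp add: ext_bij_restrict_id ext_bij_in)

lemma bij_hom_compose:
  assumes "ext_bij \<phi> A0 A1" "bij_hom (A0, A1, \<phi>) (B0, B1, \<psi>) \<rho>0 \<rho>1" "bij_hom (B0, B1, \<psi>) t \<sigma>0 \<sigma>1"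
  shows "bij_hom (A0, A1, \<phi>) t (compose A0 \<sigma>0 \<rho>0) (compose A1 \<sigma>1 \<rho>1)"
proof (cases t)
  case (fields C0 C1 \<chi>)
  have "\<forall>a\<in>A0. \<chi> (compose A0 \<sigma>0 \<rho>0 a) = compose A1 \<sigma>1 \<rho>1 (\<phi> a)"
    using assms fields by (auto simp: compose_def ext_bij_in)
  then show ?thesis using assms fields by (auto intro: ext_bij_compose)
qed

lemma bij_hom_inverse:
  assumes \<phi>: "ext_bij \<phi> A0 A1" and \<rho>: "bij_hom (A0, A1, \<phi>) (B0, B1, \<psi>) \<rho>0 \<rho>1"
  shows "bij_hom (B0, B1, \<psi>) (A0, A1, \<phi>) (ext_inv \<rho>0 A0 B0) (ext_inv \<rho>1 A1 B1)"
proof -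
  have \<rho>0: "ext_bij \<rho>0 A0 B0" and \<rho>1: "ext_bij \<rho>1 A1 B1" using \<rho> by simp_all
  have "\<phi> (ext_inv \<rho>0 A0 B0 b) = ext_inv \<rho>1 A1 B1 (\<psi> b)" if b: "b \<in> B0" for b
  proof -
    define a where "a = ext_inv \<rho>0 A0 B0 b"
    have a: "a \<in> A0" "\<rho>0 a = b" using b \<rho>0 by (simp_all add: a_def ext_inv_in apply_ext_inv)
    then have "\<psi> b = \<rho>1 (\<phi> a)" using \<rho> by auto
    then show ?thesis using a \<phi> \<rho>1 by (simp add: a_def[symmetric] ext_inv_apply ext_bij_in)
  qed
  then show ?thesis using \<rho>0 \<rho>1 by (simp add: ext_bij_ext_inv)
qed

lemma bij_hom_swap:
  assumes \<phi>: "ext_bij \<phi> A0 A1" and \<psi>: "ext_bij \<psi> B0 B1" and \<rho>: "bij_hom (A0, A1, \<phi>) (B0, B1, \<psi>) \<rho>0 \<rho>1"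
  shows "bij_hom (A1, A0, ext_inv \<phi> A0 A1) (B1, B0, ext_inv \<psi> B0 B1) \<rho>1 \<rho>0"
proof -
  have \<rho>0: "ext_bij \<rho>0 A0 B0" and \<rho>1: "ext_bij \<rho>1 A1 B1" using \<rho> by simp_all
  have "ext_inv \<psi> B0 B1 (\<rho>1 a) = \<rho>0 (ext_inv \<phi> A0 A1 a)" if a: "a \<in> A1" for a
  proof -
    define a' where "a' = ext_inv \<phi> A0 A1 a"
    have a': "a' \<in> A0" "\<phi> a' = a" using a \<phi> by (simp_all add: a'_def ext_inv_in apply_ext_inv)
    then have "\<rho>1 a = \<psi> (\<rho>0 a')" using \<rho> by auto
    then show ?thesis using a' \<psi> \<rho>0 by (simp add: a'_def[symmetric] ext_inv_apply ext_bij_in)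
  qed
  then show ?thesis using \<rho>0 \<rho>1 by simp
qed

lemma UD_objs_iff: "(A0, A1, \<phi>) \<in> UD_objs \<kappa> \<longleftrightarrow> |A0| <o \<kappa> \<and> |A1| <o \<kappa> \<and> ext_bij \<phi> A0 A1"
  by (simp add: UD_objs_def)

lemma UDt_objs_iff: "(A0, A1, a, \<phi>) \<in> UDt_objs \<kappa> \<longleftrightarrow> (A0, A1, \<phi>) \<in> UD_objs \<kappa> \<and> a \<in> A0"
  by (auto simp: UDt_objs_def)

lemma U_Delta_simps:
  "Ob (U_Delta \<kappa>) = UD_objs \<kappa>"
  "((A0, A1, \<phi>), (B0, B1, \<psi>), \<rho>0, \<rho>1) \<in> Ar (U_Delta \<kappa>) \<longleftrightarrow>
     (A0, A1, \<phi>) \<in> UD_objs \<kappa> \<and> (B0, B1, \<psi>) \<in> UD_objs \<kappa> \<and> bij_hom (A0, A1, \<phi>) (B0, B1, \<psi>) \<rho>0 \<rho>1"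
  "Dom (U_Delta \<kappa>) (s, t, \<rho>0, \<rho>1) = s"
  "Cod (U_Delta \<kappa>) (s, t, \<rho>0, \<rho>1) = t"
  "Idt (U_Delta \<kappa>) (A0, A1, \<phi>) = ((A0, A1, \<phi>), (A0, A1, \<phi>), restrict id A0, restrict id A1)"
  "Comp (U_Delta \<kappa>) (s', t', \<sigma>0, \<sigma>1) ((A0, A1, \<phi>), t, \<rho>0, \<rho>1) =
     ((A0, A1, \<phi>), t', compose A0 \<sigma>0 \<rho>0, compose A1 \<sigma>1 \<rho>1)"
  "invo (U_Delta \<kappa>) (A0, A1, \<phi>) = (A1, A0, ext_inv \<phi> A0 A1)"
  "inva (U_Delta \<kappa>) ((A0, A1, \<phi>), (B0, B1, \<psi>), \<rho>0, \<rho>1) =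
     ((A1, A0, ext_inv \<phi> A0 A1), (B1, B0, ext_inv \<psi> B0 B1), \<rho>1, \<rho>0)"
  by (simp_all add: U_Delta_def)

lemma U_Delta_ObE:
  assumes "x \<in> Ob (U_Delta \<kappa>)"
  obtains A0 A1 \<phi> where "x = (A0, A1, \<phi>)" "(A0, A1, \<phi>) \<in> UD_objs \<kappa>"
  using assms by (cases x) (simp add: U_Delta_simps)

lemma U_Delta_ArE:
  assumes "f \<in> Ar (U_Delta \<kappa>)"
  obtains A0 A1 \<phi> B0 B1 \<psi> \<rho>0 \<rho>1 where "f = ((A0, A1, \<phi>), (B0, B1, \<psi>), \<rho>0, \<rho>1)"
    "(A0, A1, \<phi>) \<in> UD_objs \<kappa>" "(B0, B1, \<psi>) \<in> UD_objs \<kappa>" "bij_hom (A0, A1, \<phi>) (B0, B1, \<psi>) \<rho>0 \<rho>1"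
    "ext_bij \<rho>0 A0 B0" "ext_bij \<rho>1 A1 B1"
  using assms by (cases f) (auto simp: U_Delta_def)

lemma U_Delta_is_gpdG: "is_gpdG (U_Delta \<kappa>)"
proof (rule is_gpdGI)
  show "is_gpd (U_Delta \<kappa>)"
  proof (rule is_gpdI)
    fix f assume "f \<in> Ar (U_Delta \<kappa>)"
    then show "\<exists>g. is_inverse (U_Delta \<kappa>) g f"
    proof (cases rule: U_Delta_ArE)
      case (1 A0 A1 \<phi> B0 B1 \<psi> \<rho>0 \<rho>1)
      then show ?thesis
        by (intro exI[of _ "((B0, B1, \<psi>), (A0, A1, \<phi>), ext_inv \<rho>0 A0 B0, ext_inv \<rho>1 A1 B1)"])
          (auto simp: is_inverse_def U_Delta_simps UD_objs_iff bij_hom_inverse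
            compose_ext_inv_left compose_ext_inv_right simp del: bij_hom.simps)
    qed
  qed (auto elim!: U_Delta_ArE U_Delta_ObE
      simp: U_Delta_simps UD_objs_iff bij_hom_id bij_hom_compose
      compose_restrict_id_left compose_restrict_id_right compose_assoc ext_bij_funcset simp del: bij_hom.simps)
  show "is_functor (U_Delta \<kappa>) (U_Delta \<kappa>) (inv_fnctr (U_Delta \<kappa>))"
    by (rule is_functorI)
      (auto elim!: U_Delta_ArE U_Delta_ObE simp: U_Delta_simps UD_objs_iff ext_bij_ext_inv bij_hom_swap
        simp del: bij_hom.simps)
qed (auto elim!: U_Delta_ArE U_Delta_ObE simp: U_Delta_simps UD_objs_iff ext_inv_ext_inv)

lemma U_Delta_tilde_simps:
  "Ob (U_Delta_tilde \<kappa>) = UDt_objs \<kappa>"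
  "((A0, A1, a, \<phi>), (B0, B1, b, \<psi>), \<rho>0, \<rho>1) \<in> Ar (U_Delta_tilde \<kappa>) \<longleftrightarrow>
     (A0, A1, a, \<phi>) \<in> UDt_objs \<kappa> \<and> (B0, B1, b, \<psi>) \<in> UDt_objs \<kappa> \<and>
     bij_hom (A0, A1, \<phi>) (B0, B1, \<psi>) \<rho>0 \<rho>1 \<and> \<rho>0 a = b"
  "Dom (U_Delta_tilde \<kappa>) (s, t, \<rho>0, \<rho>1) = s"
  "Cod (U_Delta_tilde \<kappa>) (s, t, \<rho>0, \<rho>1) = t"
  "Idt (U_Delta_tilde \<kappa>) (A0, A1, a, \<phi>) = ((A0, A1, a, \<phi>), (A0, A1, a, \<phi>), restrict id A0, restrict id A1)"
  "Comp (U_Delta_tilde \<kappa>) (s', t', \<sigma>0, \<sigma>1) ((A0, A1, a, \<phi>), t, \<rho>0, \<rho>1) =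
     ((A0, A1, a, \<phi>), t', compose A0 \<sigma>0 \<rho>0, compose A1 \<sigma>1 \<rho>1)"
  "invo (U_Delta_tilde \<kappa>) (A0, A1, a, \<phi>) = (A1, A0, \<phi> a, ext_inv \<phi> A0 A1)"
  "inva (U_Delta_tilde \<kappa>) ((A0, A1, a, \<phi>), (B0, B1, b, \<psi>), \<rho>0, \<rho>1) =
     ((A1, A0, \<phi> a, ext_inv \<phi> A0 A1), (B1, B0, \<psi> b, ext_inv \<psi> B0 B1), \<rho>1, \<rho>0)"
  by (simp_all add: U_Delta_tilde_def)

lemma U_Delta_tilde_ObE:
  assumes "x \<in> Ob (U_Delta_tilde \<kappa>)"
  obtains A0 A1 a \<phi> where "x = (A0, A1, a, \<phi>)" "(A0, A1, \<phi>) \<in> UD_objs \<kappa>" "a \<in> A0"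
  using assms by (cases x) (simp add: U_Delta_tilde_simps UDt_objs_iff)

lemma U_Delta_tilde_ArE:
  assumes "f \<in> Ar (U_Delta_tilde \<kappa>)"
  obtains A0 A1 a \<phi> B0 B1 \<psi> \<rho>0 \<rho>1 where "f = ((A0, A1, a, \<phi>), (B0, B1, \<rho>0 a, \<psi>), \<rho>0, \<rho>1)"
    "(A0, A1, \<phi>) \<in> UD_objs \<kappa>" "(B0, B1, \<psi>) \<in> UD_objs \<kappa>" "a \<in> A0"
    "bij_hom (A0, A1, \<phi>) (B0, B1, \<psi>) \<rho>0 \<rho>1" "ext_bij \<rho>0 A0 B0" "ext_bij \<rho>1 A1 B1"
  using assms by (cases f) (auto simp: U_Delta_tilde_def UDt_objs_iff)

lemma U_Delta_tilde_is_gpdG: "is_gpdG (U_Delta_tilde \<kappa>)"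
proof (rule is_gpdGI)
  show "is_gpd (U_Delta_tilde \<kappa>)"
  proof (rule is_gpdI)
    fix f assume "f \<in> Ar (U_Delta_tilde \<kappa>)"
    then show "\<exists>g. is_inverse (U_Delta_tilde \<kappa>) g f"
    proof (cases rule: U_Delta_tilde_ArE)
      case (1 A0 A1 a \<phi> B0 B1 \<psi> \<rho>0 \<rho>1)
      then show ?thesis
        by (intro exI[of _ "((B0, B1, \<rho>0 a, \<psi>), (A0, A1, a, \<phi>), ext_inv \<rho>0 A0 B0, ext_inv \<rho>1 A1 B1)"])
          (auto simp: is_inverse_def U_Delta_tilde_simps UDt_objs_iff UD_objs_iff
            bij_hom_inverse compose_ext_inv_left compose_ext_inv_right ext_inv_apply ext_bij_in
            simp del: bij_hom.simps)
    qed
  qed (auto elim!: U_Delta_tilde_ArE U_Delta_tilde_ObE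
      simp: U_Delta_tilde_simps UDt_objs_iff UD_objs_iff bij_hom_id bij_hom_compose ext_bij_in compose_eq
      compose_restrict_id_left compose_restrict_id_right compose_assoc ext_bij_funcset
      simp del: bij_hom.simps)
  show "is_functor (U_Delta_tilde \<kappa>) (U_Delta_tilde \<kappa>) (inv_fnctr (U_Delta_tilde \<kappa>))"
    by (rule is_functorI)
      (auto elim!: U_Delta_tilde_ArE U_Delta_tilde_ObE simp: U_Delta_tilde_simps UDt_objs_iff UD_objs_iff
        ext_bij_ext_inv bij_hom_swap bij_hom_commute ext_bij_in simp del: bij_hom.simps)
next
  fix x assume "x \<in> Ob (U_Delta_tilde \<kappa>)"
  then show "invo (U_Delta_tilde \<kappa>) (invo (U_Delta_tilde \<kappa>) x) = x"
    by (cases rule: U_Delta_tilde_ObE) (simp add: U_Delta_tilde_simps UD_objs_iff ext_inv_ext_inv ext_inv_apply)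
next
  fix f assume "f \<in> Ar (U_Delta_tilde \<kappa>)"
  then show "inva (U_Delta_tilde \<kappa>) (inva (U_Delta_tilde \<kappa>) f) = f"
  proof (cases rule: U_Delta_tilde_ArE)
    case (1 A0 A1 a \<phi> B0 B1 \<psi> \<rho>0 \<rho>1)
    then show ?thesis
      using ext_inv_apply[of \<psi> B0 B1 "\<rho>0 a"]
      by (simp add: U_Delta_tilde_simps UD_objs_iff ext_inv_ext_inv ext_inv_apply ext_bij_in)
  qed
qed

section \<open>Pullbacks of \<open>p_\<Delta>\<close>\<close>

lemma p_Delta_simps:
  "fo p_Delta (A0, A1, a, \<phi>) = (A0, A1, \<phi>)"
  "fa p_Delta ((A0, A1, a, \<phi>), (B0, B1, b, \<psi>), \<rho>0, \<rho>1) = ((A0, A1, \<phi>), (B0, B1, \<psi>), \<rho>0, \<rho>1)"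
  by (simp_all add: p_Delta_def)

lemma p_Delta_morG: "is_morG (U_Delta_tilde \<kappa>) (U_Delta \<kappa>) p_Delta"
proof (rule is_morGI[OF U_Delta_tilde_is_gpdG U_Delta_is_gpdG])
  show "is_functor (U_Delta_tilde \<kappa>) (U_Delta \<kappa>) p_Delta"
    by (rule is_functorI)
      (auto elim!: U_Delta_tilde_ArE U_Delta_tilde_ObE simp: p_Delta_simps U_Delta_simps U_Delta_tilde_simps
        UDt_objs_iff simp del: bij_hom.simps)
qed (auto elim!: U_Delta_tilde_ArE U_Delta_tilde_ObE simp: p_Delta_simps U_Delta_simps U_Delta_tilde_simps
    simp del: bij_hom.simps)

lemma p_Delta_discrete_fibration: "discrete_fibration (U_Delta_tilde \<kappa>) (U_Delta \<kappa>) p_Delta"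
  unfolding discrete_fibration_def
proof (intro conjI ballI impI)
  show "is_functor (U_Delta_tilde \<kappa>) (U_Delta \<kappa>) p_Delta" using p_Delta_morG by (rule morG_functor)
  fix y g assume "y \<in> Ob (U_Delta_tilde \<kappa>)" and "g \<in> Ar (U_Delta \<kappa>)"
    and "Dom (U_Delta \<kappa>) g = fo p_Delta y"
  then obtain A0 A1 a \<phi> B0 B1 \<psi> \<rho>0 \<rho>1 where y: "y = (A0, A1, a, \<phi>)" "a \<in> A0"
    and g: "g = ((A0, A1, \<phi>), (B0, B1, \<psi>), \<rho>0, \<rho>1)" "(A0, A1, \<phi>) \<in> UD_objs \<kappa>"
      "(B0, B1, \<psi>) \<in> UD_objs \<kappa>" "bij_hom (A0, A1, \<phi>) (B0, B1, \<psi>) \<rho>0 \<rho>1" "ext_bij \<rho>0 A0 B0"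
    by (auto elim!: U_Delta_tilde_ObE U_Delta_ArE simp: U_Delta_simps p_Delta_simps simp del: bij_hom.simps)
  show "\<exists>!v. v \<in> Ar (U_Delta_tilde \<kappa>) \<and> Dom (U_Delta_tilde \<kappa>) v = y \<and> fa p_Delta v = g"
  proof (rule ex1I[of _ "((A0, A1, a, \<phi>), (B0, B1, \<rho>0 a, \<psi>), \<rho>0, \<rho>1)"])
    show "((A0, A1, a, \<phi>), (B0, B1, \<rho>0 a, \<psi>), \<rho>0, \<rho>1) \<in> Ar (U_Delta_tilde \<kappa>) \<and>
        Dom (U_Delta_tilde \<kappa>) ((A0, A1, a, \<phi>), (B0, B1, \<rho>0 a, \<psi>), \<rho>0, \<rho>1) = y \<and>
        fa p_Delta ((A0, A1, a, \<phi>), (B0, B1, \<rho>0 a, \<psi>), \<rho>0, \<rho>1) = g"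
      using y g by (simp add: U_Delta_tilde_simps UDt_objs_iff p_Delta_simps ext_bij_in del: bij_hom.simps)
  qed (use y g in \<open>auto elim!: U_Delta_tilde_ArE simp: U_Delta_tilde_simps p_Delta_simps
      simp del: bij_hom.simps\<close>)
qed

lemma card_fiber_p_Delta_le: "|fiber_obj (U_Delta_tilde \<kappa>) p_Delta (A0, A1, \<phi>)| \<le>o |A0|"
proof -
  let ?point = "\<lambda>(A0 :: 'u set, A1 :: 'u set, a :: 'u, \<phi> :: 'u \<Rightarrow> 'u). a"
  have "inj_on ?point (fiber_obj (U_Delta_tilde \<kappa>) p_Delta (A0, A1, \<phi>))"
    "?point ` fiber_obj (U_Delta_tilde \<kappa>) p_Delta (A0, A1, \<phi>) \<subseteq> A0"
    by (auto simp: inj_on_def fiber_obj_def p_Delta_simps elim!: U_Delta_tilde_ObE)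
  then show ?thesis unfolding card_of_ordLeq[symmetric] by blast
qed

lemma pullback_of_p_Delta_imp_small_discrete_fibration:
  assumes "is_pullback_of E B F (U_Delta_tilde \<kappa>) (U_Delta \<kappa>) p_Delta"
  shows "discrete_fibration E B F \<and> (\<forall>b\<in>Ob B. |fiber_obj E F b| <o \<kappa>)"
proof -
  obtain G H where sq: "is_pullback_square E B (U_Delta_tilde \<kappa>) (U_Delta \<kappa>) F H p_Delta G"
    using assms unfolding is_pullback_of_def by blast
  have "|fiber_obj E F b| <o \<kappa>" if b: "b \<in> Ob B" for b
  proof -
    have "fo G b \<in> Ob (U_Delta \<kappa>)"
      using sq b by (auto simp: is_pullback_square_def intro: functor_fo_in morG_functor)
    then obtain A0 A1 \<phi> where Gb: "fo G b = (A0, A1, \<phi>)" "|A0| <o \<kappa>"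
      by (auto elim!: U_Delta_ObE simp: UD_objs_iff)
    have "|fiber_obj E F b| \<le>o |A0|"
      using card_fiber_pullback_le[OF sq, of b] card_fiber_p_Delta_le Gb(1) ordLeq_transitive by metis
    then show ?thesis using Gb(2) ordLeq_ordLess_trans by blast
  qed
  then show ?thesis using discrete_fibration_pullback[OF sq p_Delta_discrete_fibration] by blast
qed

section \<open>Classifying small discrete fibrations\<close>

locale small_discrete_fibration =
  fixes \<kappa> :: "'u rel" and E :: "('eo, 'ea) gpdG" and B :: "('bo, 'ba) gpdG"
    and F :: "('eo, 'ea, 'bo, 'ba) fnctr"
  assumes morG: "is_morG E B F" and discrete: "discrete_fibration E B F"
    and small: "\<forall>b\<in>Ob B. |fiber_obj E F b| <o \<kappa>" and card_order: "Card_order \<kappa>"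
begin

lemma E_gpdG: "is_gpdG E" and B_gpdG: "is_gpdG B" and E_gpd: "is_gpd E" and B_gpd: "is_gpd B"
  and F_functor: "is_functor E B F"
  using morG by (simp_all add: is_morG_def is_gpdG_def)

abbreviation fiber :: "'bo \<Rightarrow> 'eo set" where "fiber b \<equiv> fiber_obj E F b"

lemma in_fiber_iff: "x \<in> fiber b \<longleftrightarrow> x \<in> Ob E \<and> fo F x = b"
  by (simp add: fiber_obj_def)

lemma invo_in_fiber: "x \<in> fiber b \<Longrightarrow> invo E x \<in> fiber (invo B b)"
  using gpdG_invo_in[OF E_gpdG] morG_invo[OF morG] by (auto simp: in_fiber_iff)

text \<open>Each fiber is coded by a subset of \<open>'u\<close>, which is possible because it is smaller than \<open>\<kappa>\<close>
  and \<open>\<kappa>\<close> lives on \<open>'u\<close>.\<close>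
definition code :: "'bo \<Rightarrow> 'eo \<Rightarrow> 'u" where "code b = (SOME c. inj_on c (fiber b))"
definition codes :: "'bo \<Rightarrow> 'u set" where "codes b = code b ` fiber b"
definition decode :: "'bo \<Rightarrow> 'u \<Rightarrow> 'eo" where "decode b = the_inv_into (fiber b) (code b)"

lemma inj_on_code: "inj_on (code b) (fiber b)"
proof -
  have "\<exists>c :: 'eo \<Rightarrow> 'u. inj_on c (fiber b)"
  proof (cases "b \<in> Ob B")
    case True
    have "|fiber b| \<le>o \<kappa>" using small True ordLess_imp_ordLeq by blast
    then have "|fiber b| \<le>o |Field \<kappa>|"
      using ordLeq_ordIso_trans ordIso_symmetric[OF card_of_Field_ordIso[OF card_order]] by blast
    then have "\<exists>c. inj_on c (fiber b) \<and> c ` fiber b \<subseteq> Field \<kappa>" unfolding card_of_ordLeq .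
    then show ?thesis by blast
  next
    case False
    then have "fiber b = {}" using functor_fo_in[OF F_functor] by (auto simp: in_fiber_iff)
    then show ?thesis by simp
  qed
  then show ?thesis unfolding code_def by (rule someI_ex)
qed

lemma code_in_codes: "x \<in> fiber b \<Longrightarrow> code b x \<in> codes b"
  by (simp add: codes_def)

lemma decode_code: "x \<in> fiber b \<Longrightarrow> decode b (code b x) = x"
  unfolding decode_def using inj_on_code by (rule the_inv_into_f_f)

lemma code_decode: "a \<in> codes b \<Longrightarrow> code b (decode b a) = a"
  unfolding decode_def codes_def using inj_on_code by (rule f_the_inv_into_f)

lemma decode_in_fiber: "a \<in> codes b \<Longrightarrow> decode b a \<in> fiber b"
  unfolding decode_def codes_def using inj_on_code by (rule the_inv_into_into) auto

lemma codes_small: "b \<in> Ob B \<Longrightarrow> |codes b| <o \<kappa>"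
  unfolding codes_def using card_of_image small ordLeq_ordLess_trans by blast

definition invo_code :: "'bo \<Rightarrow> 'u \<Rightarrow> 'u" where
  "invo_code b = restrict (\<lambda>a. code (invo B b) (invo E (decode b a))) (codes b)"

lemma invo_code_code: "x \<in> fiber b \<Longrightarrow> invo_code b (code b x) = code (invo B b) (invo E x)"
  by (simp add: invo_code_def code_in_codes decode_code)

lemma invo_code_invo_code:
  assumes b: "b \<in> Ob B" and a: "a \<in> codes b"
  shows "invo_code (invo B b) (invo_code b a) = a"
proof -
  have x: "decode b a \<in> fiber b" using decode_in_fiber[OF a] .
  have "invo_code b a = code (invo B b) (invo E (decode b a))" using a by (simp add: invo_code_def)
  then have "invo_code (invo B b) (invo_code b a) = code (invo B (invo B b)) (invo E (invo E (decode b a)))"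
    using invo_code_code[OF invo_in_fiber[OF x]] by simp
  also have "\<dots> = code b (decode b a)"
    using gpdG_invo_invo[OF B_gpdG b] gpdG_invo_invo[OF E_gpdG] x by (simp add: in_fiber_iff)
  finally show ?thesis using code_decode[OF a] by simp
qed

lemma invo_code_in: "a \<in> codes b \<Longrightarrow> invo_code b a \<in> codes (invo B b)"
  by (simp add: invo_code_def code_in_codes invo_in_fiber decode_in_fiber)

lemma ext_bij_invo_code: "b \<in> Ob B \<Longrightarrow> ext_bij (invo_code b) (codes b) (codes (invo B b))"
  unfolding ext_bij_def
proof
  assume b: "b \<in> Ob B"
  show "bij_betw (invo_code b) (codes b) (codes (invo B b))"
  proof (rule bij_betw_byWitness[where f' = "invo_code (invo B b)"])
    show "\<forall>a\<in>codes (invo B b). invo_code b (invo_code (invo B b) a) = a"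
      using invo_code_invo_code[OF gpdG_invo_in[OF B_gpdG b]] gpdG_invo_invo[OF B_gpdG b] by simp
    show "invo_code (invo B b) ` codes (invo B b) \<subseteq> codes b"
      using invo_code_in[of _ "invo B b"] gpdG_invo_invo[OF B_gpdG b] by auto
  qed (use b invo_code_in invo_code_invo_code in blast)+
qed (simp add: invo_code_def)

lemma ext_inv_invo_code: "b \<in> Ob B \<Longrightarrow> ext_inv (invo_code b) (codes b) (codes (invo B b)) = invo_code (invo B b)"
proof (rule ext_inv_unique[OF ext_bij_invo_code])
  show "invo_code (invo B b) \<in> extensional (codes (invo B b))" by (simp add: invo_code_def)
qed (simp_all add: invo_code_invo_code)

definition lift :: "'ba \<Rightarrow> 'eo \<Rightarrow> 'ea" where
  "lift h x = (THE k. k \<in> Ar E \<and> Dom E k = x \<and> fa F k = h)"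

lemma lift_eq: "k \<in> Ar E \<Longrightarrow> Dom E k = x \<Longrightarrow> fa F k = h \<Longrightarrow> lift h x = k"
  unfolding lift_def by (rule the_equality) (auto intro: discrete_fibration_unique[OF discrete E_gpd])

lemma
  assumes "x \<in> fiber (Dom B h)" and "h \<in> Ar B"
  shows lift_in_Ar: "lift h x \<in> Ar E" and Dom_lift: "Dom E (lift h x) = x" and F_lift: "fa F (lift h x) = h"
proof -
  obtain k where "k \<in> Ar E" "Dom E k = x" "fa F k = h"
    using discrete_fibration_lift[OF discrete _ assms(2)] assms(1) unfolding in_fiber_iff by metis
  moreover from this have "lift h x = k" by (rule lift_eq)
  ultimately show "lift h x \<in> Ar E" "Dom E (lift h x) = x" "fa F (lift h x) = h" by simp_all
qed

lemma Cod_lift_in_fiber: "x \<in> fiber (Dom B h) \<Longrightarrow> h \<in> Ar B \<Longrightarrow> Cod E (lift h x) \<in> fiber (Cod B h)"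
  using gpd_Cod_in[OF E_gpd lift_in_Ar] functor_Cod[OF F_functor lift_in_Ar] F_lift
  by (simp add: in_fiber_iff)

lemma lift_Idt: "x \<in> Ob E \<Longrightarrow> lift (Idt B (fo F x)) x = Idt E x"
  by (rule lift_eq) (simp_all add: gpd_Idt_in[OF E_gpd] gpd_Dom_Idt[OF E_gpd] functor_Idt[OF F_functor])

lemma lift_Comp:
  assumes x: "x \<in> fiber (Dom B h)" and h: "h \<in> Ar B" and g: "g \<in> Ar B" and hg: "Cod B h = Dom B g"
  shows "lift (Comp B g h) x = Comp E (lift g (Cod E (lift h x))) (lift h x)"
proof (rule lift_eq)
  have y: "Cod E (lift h x) \<in> fiber (Dom B g)" using Cod_lift_in_fiber[OF x h] hg by simp
  have c: "Cod E (lift h x) = Dom E (lift g (Cod E (lift h x)))" using Dom_lift[OF y g] by simp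
  note l = lift_in_Ar[OF x h] lift_in_Ar[OF y g]
  show "Comp E (lift g (Cod E (lift h x))) (lift h x) \<in> Ar E" using gpd_Comp_in[OF E_gpd l c] .
  show "Dom E (Comp E (lift g (Cod E (lift h x))) (lift h x)) = x"
    using gpd_Dom_Comp[OF E_gpd l c] Dom_lift[OF x h] by simp
  show "fa F (Comp E (lift g (Cod E (lift h x))) (lift h x)) = Comp B g h"
    using functor_Comp[OF F_functor l c] F_lift[OF x h] F_lift[OF y g] by simp
qed

lemma lift_inva:
  assumes x: "x \<in> fiber (Dom B h)" and h: "h \<in> Ar B"
  shows "lift (inva B h) (invo E x) = inva E (lift h x)"
  using gpdG_inva_in[OF E_gpdG lift_in_Ar[OF x h]] gpdG_Dom_inva[OF E_gpdG lift_in_Ar[OF x h]]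
    morG_inva[OF morG lift_in_Ar[OF x h]] Dom_lift[OF x h] F_lift[OF x h]
  by (intro lift_eq) simp_all

definition transport :: "'ba \<Rightarrow> 'u \<Rightarrow> 'u" where
  "transport h = restrict (\<lambda>a. code (Cod B h) (Cod E (lift h (decode (Dom B h) a)))) (codes (Dom B h))"

lemma transport_code:
  "x \<in> fiber (Dom B h) \<Longrightarrow> transport h (code (Dom B h) x) = code (Cod B h) (Cod E (lift h x))"
  by (simp add: transport_def code_in_codes decode_code)

lemma transport_in: "h \<in> Ar B \<Longrightarrow> a \<in> codes (Dom B h) \<Longrightarrow> transport h a \<in> codes (Cod B h)"
  by (simp add: transport_def code_in_codes Cod_lift_in_fiber decode_in_fiber)

lemma transport_Idt: assumes b: "b \<in> Ob B" shows "transport (Idt B b) = restrict id (codes b)"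
proof (rule extensionalityI[of _ "codes b"])
  show "transport (Idt B b) \<in> extensional (codes b)" using gpd_Dom_Idt[OF B_gpd b] by (simp add: transport_def)
  fix a assume a: "a \<in> codes b"
  have x: "decode b a \<in> fiber b" using decode_in_fiber[OF a] .
  then have "lift (Idt B b) (decode b a) = Idt E (decode b a)"
    using lift_Idt[of "decode b a"] by (simp add: in_fiber_iff)
  then show "transport (Idt B b) a = restrict id (codes b) a"
    using a x gpd_Dom_Idt[OF B_gpd b] gpd_Cod_Idt[OF B_gpd b] gpd_Cod_Idt[OF E_gpd]
    by (simp add: transport_def code_decode in_fiber_iff)
qed simp

lemma transport_Comp:
  assumes h: "h \<in> Ar B" and g: "g \<in> Ar B" and hg: "Cod B h = Dom B g"
  shows "transport (Comp B g h) = compose (codes (Dom B h)) (transport g) (transport h)"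
proof (rule extensionalityI[of _ "codes (Dom B h)"])
  show "transport (Comp B g h) \<in> extensional (codes (Dom B h))"
    using gpd_Dom_Comp[OF B_gpd h g hg] by (simp add: transport_def)
  fix a assume a: "a \<in> codes (Dom B h)"
  define x where "x = decode (Dom B h) a"
  have x: "x \<in> fiber (Dom B h)" using decode_in_fiber[OF a] by (simp add: x_def)
  have y: "Cod E (lift h x) \<in> fiber (Dom B g)" using Cod_lift_in_fiber[OF x h] hg by simp
  have c: "Cod E (lift h x) = Dom E (lift g (Cod E (lift h x)))" using Dom_lift[OF y g] by simp
  have "transport (Comp B g h) a = code (Cod B g) (Cod E (lift (Comp B g h) x))"
    using a gpd_Dom_Comp[OF B_gpd h g hg] gpd_Cod_Comp[OF B_gpd h g hg] by (simp add: transport_def x_def)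
  also have "\<dots> = code (Cod B g) (Cod E (lift g (Cod E (lift h x))))"
    using lift_Comp[OF x h g hg] gpd_Cod_Comp[OF E_gpd lift_in_Ar[OF x h] lift_in_Ar[OF y g] c] by simp
  also have "\<dots> = transport g (transport h a)"
    using transport_code[OF y] a hg by (simp add: transport_def x_def)
  finally show "transport (Comp B g h) a = compose (codes (Dom B h)) (transport g) (transport h) a"
    using a by (simp add: compose_def)
qed (simp add: compose_def)

lemma ext_bij_transport:
  assumes h: "h \<in> Ar B" shows "ext_bij (transport h) (codes (Dom B h)) (codes (Cod B h))"
proof -
  obtain h' where h': "is_inverse B h' h" using gpd_inverse_ex[OF B_gpd h] by blast
  then have h'': "h' \<in> Ar B" "Dom B h' = Cod B h" "Cod B h' = Dom B h"
    "Comp B h' h = Idt B (Dom B h)" "Comp B h h' = Idt B (Cod B h)"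
    by (simp_all add: is_inverse_def)
  have "transport h' (transport h a) = a" if "a \<in> codes (Dom B h)" for a
  proof -
    have "transport h' (transport h a) = transport (Comp B h' h) a"
      using that transport_Comp[OF h h''(1)] h''(2) by (simp add: compose_eq)
    then show ?thesis using that h''(4) transport_Idt[OF gpd_Dom_in[OF B_gpd h]] by simp
  qed
  moreover have "transport h (transport h' a) = a" if "a \<in> codes (Cod B h)" for a
  proof -
    have "transport h (transport h' a) = transport (Comp B h h') a"
      using that transport_Comp[OF h''(1) h] h''(2,3) by (simp add: compose_eq)
    then show ?thesis using that h''(5) transport_Idt[OF gpd_Cod_in[OF B_gpd h]] by simp
  qed
  ultimately have "bij_betw (transport h) (codes (Dom B h)) (codes (Cod B h))"
    using transport_in[OF h] transport_in[OF h''(1)] h''(2,3)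
    by (intro bij_betw_byWitness[where f' = "transport h'"]) auto
  then show ?thesis by (simp add: ext_bij_def transport_def)
qed

lemma invo_code_transport:
  assumes h: "h \<in> Ar B" and a: "a \<in> codes (Dom B h)"
  shows "invo_code (Cod B h) (transport h a) = transport (inva B h) (invo_code (Dom B h) a)"
proof -
  define x where "x = decode (Dom B h) a"
  have x: "x \<in> fiber (Dom B h)" using decode_in_fiber[OF a] by (simp add: x_def)
  have ix: "invo E x \<in> fiber (Dom B (inva B h))" using invo_in_fiber[OF x] gpdG_Dom_inva[OF B_gpdG h] by simp
  have "invo_code (Cod B h) (transport h a) = code (invo B (Cod B h)) (invo E (Cod E (lift h x)))"
    using transport_code[OF x] invo_code_code[OF Cod_lift_in_fiber[OF x h]] a by (simp add: x_def code_decode)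
  also have "\<dots> = code (Cod B (inva B h)) (Cod E (lift (inva B h) (invo E x)))"
    using lift_inva[OF x h] gpdG_Cod_inva[OF E_gpdG lift_in_Ar[OF x h]] gpdG_Cod_inva[OF B_gpdG h] by simp
  also have "\<dots> = transport (inva B h) (invo_code (Dom B h) a)"
    using transport_code[OF ix] invo_code_code[OF x] a gpdG_Dom_inva[OF B_gpdG h] by (simp add: x_def code_decode)
  finally show ?thesis .
qed

definition classifier_ob :: "'bo \<Rightarrow> 'u UDob" where
  "classifier_ob b = (codes b, codes (invo B b), invo_code b)"

definition classifier :: "('bo, 'ba, 'u UDob, 'u UDar) fnctr" where
  "classifier = \<lparr>fo = classifier_ob,
     fa = \<lambda>h. (classifier_ob (Dom B h), classifier_ob (Cod B h), transport h, transport (inva B h))\<rparr>"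

lemma classifier_simps:
  "fo classifier b = classifier_ob b"
  "fa classifier h = (classifier_ob (Dom B h), classifier_ob (Cod B h), transport h, transport (inva B h))"
  by (simp_all add: classifier_def)

lemma classifier_ob_in: "b \<in> Ob B \<Longrightarrow> classifier_ob b \<in> UD_objs \<kappa>"
  by (simp add: classifier_ob_def UD_objs_iff codes_small gpdG_invo_in[OF B_gpdG] ext_bij_invo_code)

lemma classifier_ar_in: assumes h: "h \<in> Ar B" shows "fa classifier h \<in> Ar (U_Delta \<kappa>)"
proof -
  have "ext_bij (transport (inva B h)) (codes (invo B (Dom B h))) (codes (invo B (Cod B h)))"
    using ext_bij_transport[OF gpdG_inva_in[OF B_gpdG h]] gpdG_Dom_inva[OF B_gpdG h] gpdG_Cod_inva[OF B_gpdG h]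
    by simp
  then show ?thesis
    using h by (simp add: classifier_simps classifier_ob_def U_Delta_simps classifier_ob_in[unfolded classifier_ob_def]
        gpd_Dom_in[OF B_gpd] gpd_Cod_in[OF B_gpd] ext_bij_transport invo_code_transport)
qed

lemma classifier_morG: "is_morG B (U_Delta \<kappa>) classifier"
proof (rule is_morGI[OF B_gpdG U_Delta_is_gpdG])
  show "is_functor B (U_Delta \<kappa>) classifier"
  proof (rule is_functorI)
    fix b assume "b \<in> Ob B"
    then show "fa classifier (Idt B b) = Idt (U_Delta \<kappa>) (fo classifier b)"
      by (simp add: classifier_simps classifier_ob_def U_Delta_simps gpd_Dom_Idt[OF B_gpd] gpd_Cod_Idt[OF B_gpd]
          gpdG_inva_Idt[OF B_gpdG] transport_Idt gpdG_invo_in[OF B_gpdG])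
  next
    fix h g assume h: "h \<in> Ar B" and g: "g \<in> Ar B" and hg: "Cod B h = Dom B g"
    have "Cod B (inva B h) = Dom B (inva B g)"
      using hg by (simp add: gpdG_Dom_inva[OF B_gpdG g] gpdG_Cod_inva[OF B_gpdG h])
    then show "fa classifier (Comp B g h) = Comp (U_Delta \<kappa>) (fa classifier g) (fa classifier h)"
      using h g hg
      by (simp add: classifier_simps classifier_ob_def U_Delta_simps gpd_Dom_Comp[OF B_gpd] gpd_Cod_Comp[OF B_gpd]
          gpdG_inva_Comp[OF B_gpdG] transport_Comp gpdG_inva_in[OF B_gpdG] gpdG_Dom_inva[OF B_gpdG])
  qed (simp_all add: U_Delta_simps classifier_simps classifier_ob_in classifier_ar_in[unfolded classifier_simps])
next
  fix b assume "b \<in> Ob B"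
  then show "fo classifier (invo B b) = invo (U_Delta \<kappa>) (fo classifier b)"
    by (simp add: classifier_simps classifier_ob_def U_Delta_simps gpdG_invo_invo[OF B_gpdG] ext_inv_invo_code)
next
  fix h assume "h \<in> Ar B"
  then show "fa classifier (inva B h) = inva (U_Delta \<kappa>) (fa classifier h)"
    by (simp add: classifier_simps classifier_ob_def U_Delta_simps gpdG_Dom_inva[OF B_gpdG] gpdG_Cod_inva[OF B_gpdG]
        gpdG_inva_inva[OF B_gpdG] gpdG_invo_invo[OF B_gpdG] ext_inv_invo_code gpd_Dom_in[OF B_gpd]
        gpd_Cod_in[OF B_gpd])
qed

definition pointed_classifier_ob :: "'eo \<Rightarrow> 'u UDtob" where
  "pointed_classifier_ob x = (codes (fo F x), codes (invo B (fo F x)), code (fo F x) x, invo_code (fo F x))"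

definition pointed_classifier :: "('eo, 'ea, 'u UDtob, 'u UDtar) fnctr" where
  "pointed_classifier = \<lparr>fo = pointed_classifier_ob,
     fa = \<lambda>f. (pointed_classifier_ob (Dom E f), pointed_classifier_ob (Cod E f),
                transport (fa F f), transport (inva B (fa F f)))\<rparr>"

lemma pointed_classifier_simps:
  "fo pointed_classifier x = pointed_classifier_ob x"
  "fa pointed_classifier f = (pointed_classifier_ob (Dom E f), pointed_classifier_ob (Cod E f),
     transport (fa F f), transport (inva B (fa F f)))"
  by (simp_all add: pointed_classifier_def)

lemma pointed_classifier_ob_in: "x \<in> Ob E \<Longrightarrow> pointed_classifier_ob x \<in> UDt_objs \<kappa>"
  using classifier_ob_in[OF functor_fo_in[OF F_functor]]
  by (simp add: pointed_classifier_ob_def classifier_ob_def UDt_objs_iff code_in_codes in_fiber_iff)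

lemma transport_fa_code:
  assumes f: "f \<in> Ar E"
  shows "transport (fa F f) (code (fo F (Dom E f)) (Dom E f)) = code (fo F (Cod E f)) (Cod E f)"
proof -
  have "Dom E f \<in> fiber (Dom B (fa F f))"
    using gpd_Dom_in[OF E_gpd f] functor_Dom[OF F_functor f] by (simp add: in_fiber_iff)
  from transport_code[OF this] show ?thesis
    using lift_eq[OF f refl refl] functor_Dom[OF F_functor f] functor_Cod[OF F_functor f] by simp
qed

lemma pointed_classifier_ar_in: assumes f: "f \<in> Ar E" shows "fa pointed_classifier f \<in> Ar (U_Delta_tilde \<kappa>)"
  using classifier_ar_in[OF functor_fa_in[OF F_functor f]] transport_fa_code[OF f]
    pointed_classifier_ob_in[OF gpd_Dom_in[OF E_gpd f]] pointed_classifier_ob_in[OF gpd_Cod_in[OF E_gpd f]]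
    functor_Dom[OF F_functor f] functor_Cod[OF F_functor f]
  by (simp add: pointed_classifier_simps pointed_classifier_ob_def classifier_simps classifier_ob_def
      U_Delta_simps U_Delta_tilde_simps UDt_objs_iff)

lemma invo_code_code_self: "x \<in> Ob E \<Longrightarrow> invo_code (fo F x) (code (fo F x) x) = code (fo F (invo E x)) (invo E x)"
  using invo_code_code morG_invo[OF morG] by (simp add: in_fiber_iff)

lemma pointed_classifier_morG: "is_morG E (U_Delta_tilde \<kappa>) pointed_classifier"
proof (rule is_morGI[OF E_gpdG U_Delta_tilde_is_gpdG])
  show "is_functor E (U_Delta_tilde \<kappa>) pointed_classifier"
  proof (rule is_functorI)
    fix x assume x: "x \<in> Ob E"
    then show "fa pointed_classifier (Idt E x) = Idt (U_Delta_tilde \<kappa>) (fo pointed_classifier x)"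
      using functor_fo_in[OF F_functor x]
      by (simp add: pointed_classifier_simps pointed_classifier_ob_def U_Delta_tilde_simps gpd_Dom_Idt[OF E_gpd]
          gpd_Cod_Idt[OF E_gpd] functor_Idt[OF F_functor] gpd_Dom_Idt[OF B_gpd] gpdG_inva_Idt[OF B_gpdG]
          transport_Idt gpdG_invo_in[OF B_gpdG])
  next
    fix f g assume f: "f \<in> Ar E" and g: "g \<in> Ar E" and fg: "Cod E f = Dom E g"
    have Ff: "fa F f \<in> Ar B" "fa F g \<in> Ar B" "Cod B (fa F f) = Dom B (fa F g)"
      using functor_fa_in[OF F_functor] functor_Dom[OF F_functor g] functor_Cod[OF F_functor f] f g fg by auto
    have "Cod B (inva B (fa F f)) = Dom B (inva B (fa F g))"
      using Ff by (simp add: gpdG_Dom_inva[OF B_gpdG] gpdG_Cod_inva[OF B_gpdG])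
    then show "fa pointed_classifier (Comp E g f) = Comp (U_Delta_tilde \<kappa>) (fa pointed_classifier g) (fa pointed_classifier f)"
      using f g fg Ff
      by (simp add: pointed_classifier_simps pointed_classifier_ob_def U_Delta_tilde_simps gpd_Dom_Comp[OF E_gpd]
          gpd_Cod_Comp[OF E_gpd] functor_Comp[OF F_functor] gpdG_inva_Comp[OF B_gpdG] transport_Comp
          gpdG_inva_in[OF B_gpdG] gpdG_Dom_inva[OF B_gpdG] functor_Dom[OF F_functor])
  qed (simp_all add: U_Delta_tilde_simps pointed_classifier_simps pointed_classifier_ob_in
      pointed_classifier_ar_in[unfolded pointed_classifier_simps])
next
  fix x assume x: "x \<in> Ob E"
  then show "fo pointed_classifier (invo E x) = invo (U_Delta_tilde \<kappa>) (fo pointed_classifier x)"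
    using functor_fo_in[OF F_functor x]
    by (simp add: pointed_classifier_simps pointed_classifier_ob_def U_Delta_tilde_simps gpdG_invo_invo[OF B_gpdG]
        ext_inv_invo_code morG_invo[OF morG] invo_code_code_self)
next
  fix f assume f: "f \<in> Ar E"
  then show "fa pointed_classifier (inva E f) = inva (U_Delta_tilde \<kappa>) (fa pointed_classifier f)"
    using functor_fa_in[OF F_functor f] gpd_Dom_in[OF E_gpd f] gpd_Cod_in[OF E_gpd f]
      functor_fo_in[OF F_functor gpd_Dom_in[OF E_gpd f]] functor_fo_in[OF F_functor gpd_Cod_in[OF E_gpd f]]
    by (simp add: pointed_classifier_simps pointed_classifier_ob_def U_Delta_tilde_simps gpdG_Dom_inva[OF E_gpdG]
        gpdG_Cod_inva[OF E_gpdG] morG_inva[OF morG] gpdG_inva_inva[OF B_gpdG] gpdG_invo_invo[OF B_gpdG]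
        ext_inv_invo_code morG_invo[OF morG] invo_code_code_self)
qed

lemma classifier_square_commutes:
  "fo p_Delta (fo pointed_classifier x) = fo classifier (fo F x)"
  "f \<in> Ar E \<Longrightarrow> fa p_Delta (fa pointed_classifier f) = fa classifier (fa F f)"
  by (simp_all add: pointed_classifier_simps pointed_classifier_ob_def classifier_simps classifier_ob_def p_Delta_simps
      functor_Dom[OF F_functor] functor_Cod[OF F_functor])

lemma pointed_classifier_ob_inj:
  assumes "x \<in> Ob E" "x' \<in> Ob E" "fo F x = fo F x'" "pointed_classifier_ob x = pointed_classifier_ob x'"
  shows "x = x'"
  using assms inj_on_code[of "fo F x"] by (auto simp: pointed_classifier_ob_def in_fiber_iff dest: inj_onD)

lemma Ob_over_classifier:
  assumes "y \<in> Ob (U_Delta_tilde \<kappa>)" and "fo p_Delta y = classifier_ob b"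
  shows "\<exists>x\<in>fiber b. pointed_classifier_ob x = y"
  using assms(1)
proof (cases rule: U_Delta_tilde_ObE)
  case (1 A0 A1 a \<phi>)
  then have a: "a \<in> codes b" and y: "y = (codes b, codes (invo B b), a, invo_code b)"
    using assms(2) by (simp_all add: p_Delta_simps classifier_ob_def)
  have "pointed_classifier_ob (decode b a) = y"
    using decode_in_fiber[OF a] code_decode[OF a] y by (simp add: pointed_classifier_ob_def in_fiber_iff)
  then show ?thesis using decode_in_fiber[OF a] by blast
qed

lemma Ar_over_classifier:
  assumes u: "u \<in> Ar B" and "v \<in> Ar (U_Delta_tilde \<kappa>)" and "fa p_Delta v = fa classifier u"
  shows "\<exists>f\<in>Ar E. fa F f = u \<and> fa pointed_classifier f = v"
  using assms(2)
proof (cases rule: U_Delta_tilde_ArE)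
  case (1 A0 A1 a \<phi> B0 B1 \<psi> \<rho>0 \<rho>1)
  then have a: "a \<in> codes (Dom B u)"
    and v: "v = ((codes (Dom B u), codes (invo B (Dom B u)), a, invo_code (Dom B u)),
                 (codes (Cod B u), codes (invo B (Cod B u)), transport u a, invo_code (Cod B u)),
                 transport u, transport (inva B u))"
    using assms(3) by (simp_all add: p_Delta_simps classifier_simps classifier_ob_def)
  define x where "x = decode (Dom B u) a"
  have x: "x \<in> fiber (Dom B u)" using decode_in_fiber[OF a] by (simp add: x_def)
  have "code (Dom B u) x = a" using code_decode[OF a] by (simp add: x_def)
  then have "fa pointed_classifier (lift u x) = v"
    using v x Cod_lift_in_fiber[OF x u] transport_code[OF x]
    by (simp add: pointed_classifier_simps pointed_classifier_ob_def Dom_lift[OF x u] F_lift[OF x u] in_fiber_iff)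
  then show ?thesis using lift_in_Ar[OF x u] F_lift[OF x u] by blast
qed

lemma pair_pointed_classifier_morG:
  "is_morG E (pb_obj B (U_Delta_tilde \<kappa>) classifier p_Delta) (pair_fnctr F pointed_classifier)"
  using pair_fnctr_morG[OF morG pointed_classifier_morG classifier_morG p_Delta_morG]
    classifier_square_commutes by blast

lemma bij_pair_pointed_classifier_Ob:
  "bij_betw (fo (pair_fnctr F pointed_classifier)) (Ob E) (Ob (pb_obj B (U_Delta_tilde \<kappa>) classifier p_Delta))"
  unfolding bij_betw_def
proof (intro conjI subset_antisym)
  show "inj_on (fo (pair_fnctr F pointed_classifier)) (Ob E)"
    using pointed_classifier_ob_inj by (auto simp: inj_on_def pointed_classifier_simps)
  show "fo (pair_fnctr F pointed_classifier) ` Ob E \<subseteq> Ob (pb_obj B (U_Delta_tilde \<kappa>) classifier p_Delta)"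
    using functor_fo_in[OF morG_functor[OF pair_pointed_classifier_morG]] by blast
  show "Ob (pb_obj B (U_Delta_tilde \<kappa>) classifier p_Delta) \<subseteq> fo (pair_fnctr F pointed_classifier) ` Ob E"
  proof
    fix p assume "p \<in> Ob (pb_obj B (U_Delta_tilde \<kappa>) classifier p_Delta)"
    then obtain b y where p: "p = (b, y)" "y \<in> Ob (U_Delta_tilde \<kappa>)" "fo classifier b = fo p_Delta y"
      by (rule pb_obj_ObE)
    then obtain x where "x \<in> fiber b" "pointed_classifier_ob x = y"
      using Ob_over_classifier by (metis classifier_simps(1))
    then show "p \<in> fo (pair_fnctr F pointed_classifier) ` Ob E"
      using p by (auto simp: pointed_classifier_simps in_fiber_iff)
  qed
qed

lemma bij_pair_pointed_classifier_Ar: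
  "bij_betw (fa (pair_fnctr F pointed_classifier)) (Ar E) (Ar (pb_obj B (U_Delta_tilde \<kappa>) classifier p_Delta))"
  unfolding bij_betw_def
proof (intro conjI subset_antisym)
  show "inj_on (fa (pair_fnctr F pointed_classifier)) (Ar E)"
  proof (rule inj_onI)
    fix f f' assume f: "f \<in> Ar E" and f': "f' \<in> Ar E"
      and ff': "fa (pair_fnctr F pointed_classifier) f = fa (pair_fnctr F pointed_classifier) f'"
    then have "Dom E f = Dom E f'"
      using pointed_classifier_ob_inj[OF gpd_Dom_in[OF E_gpd f] gpd_Dom_in[OF E_gpd f']]
        functor_Dom[OF F_functor f] functor_Dom[OF F_functor f'] by (simp add: pointed_classifier_simps)
    then show "f = f'" using ff' discrete_fibration_unique[OF discrete E_gpd f f'] by simp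
  qed
  show "fa (pair_fnctr F pointed_classifier) ` Ar E \<subseteq> Ar (pb_obj B (U_Delta_tilde \<kappa>) classifier p_Delta)"
    using functor_fa_in[OF morG_functor[OF pair_pointed_classifier_morG]] by blast
  show "Ar (pb_obj B (U_Delta_tilde \<kappa>) classifier p_Delta) \<subseteq> fa (pair_fnctr F pointed_classifier) ` Ar E"
  proof
    fix q assume "q \<in> Ar (pb_obj B (U_Delta_tilde \<kappa>) classifier p_Delta)"
    then obtain u v where q: "q = (u, v)" "u \<in> Ar B" "v \<in> Ar (U_Delta_tilde \<kappa>)"
      "fa classifier u = fa p_Delta v"
      by (rule pb_obj_ArE)
    then obtain f where "f \<in> Ar E" "fa F f = u" "fa pointed_classifier f = v"
      using Ar_over_classifier by metis
    then show "q \<in> fa (pair_fnctr F pointed_classifier) ` Ar E" using q by force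
  qed
qed

lemma classifier_pullback_square:
  "is_pullback_square E B (U_Delta_tilde \<kappa>) (U_Delta \<kappa>) F pointed_classifier p_Delta classifier"
  using morG pointed_classifier_morG p_Delta_morG classifier_morG classifier_square_commutes
    bij_pair_pointed_classifier_Ob bij_pair_pointed_classifier_Ar
  by (simp add: is_pullback_square_iff)

end

theorem lemma4p26:
  fixes \<kappa> :: "'u rel"
    and E :: "('eo, 'ea) gpdG" and B :: "('bo, 'ba) gpdG"
    and F :: "('eo, 'ea, 'bo, 'ba) fnctr"
  assumes "inaccessible \<kappa>"
    and "is_morG E B F"
  shows "is_pullback_of E B F (U_Delta_tilde \<kappa>) (U_Delta \<kappa>) p_Delta \<longleftrightarrow>
         (discrete_fibration E B F \<and> (\<forall>b\<in>Ob B. ordLess2 (card_of (fiber_obj E F b)) \<kappa>))"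
proof
  assume "is_pullback_of E B F (U_Delta_tilde \<kappa>) (U_Delta \<kappa>) p_Delta"
  then show "discrete_fibration E B F \<and> (\<forall>b\<in>Ob B. ordLess2 (card_of (fiber_obj E F b)) \<kappa>)"
    by (rule pullback_of_p_Delta_imp_small_discrete_fibration)
next
  assume "discrete_fibration E B F \<and> (\<forall>b\<in>Ob B. ordLess2 (card_of (fiber_obj E F b)) \<kappa>)"
  moreover have "Card_order \<kappa>" \<comment> \<open>all that is needed of inaccessibility here\<close>
    using assms(1) by (simp add: inaccessible_def)
  ultimately interpret small_discrete_fibration \<kappa> E B F
    using assms(2) by unfold_locales auto
  show "is_pullback_of E B F (U_Delta_tilde \<kappa>) (U_Delta \<kappa>) p_Delta"
    unfolding is_pullback_of_def using classifier_pullback_square by blast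
qed

end
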